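(* Let $\mathcal{X}\subseteq\mathcal{P}(\mathbb{N})$ be closed under enumeration equivalence. If $f\colon\mathcal{X}\to\mathcal{P}(\mathbb{N})$ is uniformly $e$-invariant, then $f$ has a computable uniformity function.
   Context: Enumeration reducibility: for $A,B\subseteq\mathbb{N}$, $A\le_e B$ if $A=\Gamma(B):=\{n:\exists D\subseteq B,\ \langle n,D\rangle\in\Gamma\}$ for some c.e. set $\Gamma$ of pairs $\langle n,D\rangle$ with $D$ finite (canonical index); $(\Gamma_i)_{i\in\mathbb{N}}$ is the standard computable numbering of these enumeration operators. $A\equiv_e B$ iff $A\le_e B\le_e A$. Let $\mathcal{X}\subseteq\mathcal{P}(\mathbb{N})$ be closed under $\equiv_e$. A function $f\colon\mathcal{X}\to\mathcal{P}(\mathbb{N})$ is $e$-invariant if $A\equiv_e B$ implies $f(A)\equiv_e f(B)$. Write $A\equiv_e B$ via $\langle i,j\rangle$ if $\Gamma_i(A)=B$ and $\Gamma_j(B)=A$ (with $\langle\cdot,\cdot\rangle$ a fixed computable pairing bijection). A function $u\colon\mathbb{N}\to\mathbb{N}$ is a uniformity function for $f$ if for all $A,B\in\mathcal{X}$ and all $i,j$, whenever $A\equiv_e B$ via $\langle i,j\rangle$ then $f(A)\equiv_e f(B)$ via $u(\langle i,j\rangle)$. $f$ is uniformly $e$-invariant if it has some uniformity function. *)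

theory Defs
  imports Main "HOL-Library.Nat_Bijection"
begin

datatype recf =
    Z
  | S
  | Id nat
  | Cn recf "recf list"
  | Pr recf recf
  | Mn recf

definition arg :: "nat list \<Rightarrow> nat \<Rightarrow> nat" where
  "arg xs k = (if k < length xs then xs ! k else 0)"

inductive eval :: "recf \<Rightarrow> nat list \<Rightarrow> nat \<Rightarrow> bool" where
  eval_Z: "eval Z xs 0"
| eval_S: "eval S xs (Suc (arg xs 0))"
| eval_Id: "eval (Id k) xs (arg xs k)"
| eval_Cn: "\<lbrakk> length ys = length gs; \<forall>i < length gs. eval (gs ! i) xs (ys ! i); eval f ys y \<rbrakk>
            \<Longrightarrow> eval (Cn f gs) xs y"
| eval_Pr0: "eval f xs y \<Longrightarrow> eval (Pr f g) (0 # xs) y"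
| eval_Pr0_nil: "eval f [] y \<Longrightarrow> eval (Pr f g) [] y"
| eval_PrS: "\<lbrakk> eval (Pr f g) (n # xs) z; eval g (n # z # xs) y \<rbrakk>
            \<Longrightarrow> eval (Pr f g) (Suc n # xs) y"
| eval_Mn: "\<lbrakk> eval f (n # xs) 0; \<forall>m < n. \<exists>y. eval f (m # xs) y \<and> y \<noteq> 0 \<rbrakk>
            \<Longrightarrow> eval (Mn f) xs n"

definition computable :: "(nat \<Rightarrow> nat) \<Rightarrow> bool" where
  "computable u \<longleftrightarrow> (\<exists>r. \<forall>n. eval r [n] (u n))"

fun code :: "recf \<Rightarrow> nat" where
  "code Z = prod_encode (0, 0)"
| "code S = prod_encode (1, 0)"
| "code (Id k) = prod_encode (2, k)"
| "code (Cn f gs) = prod_encode (3, prod_encode (code f, list_encode (map code gs)))"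
| "code (Pr f g) = prod_encode (4, prod_encode (code f, code g))"
| "code (Mn f) = prod_encode (5, code f)"

definition W :: "nat \<Rightarrow> nat set" where
  "W i = (if \<exists>r. code r = i then {n. \<exists>y. eval (THE r. code r = i) [n] y} else {})"

text \<open>Pairing is Cantor pairing prod_encode; finite sets are given by canonical index set_decode.\<close>
definition pair :: "nat \<Rightarrow> nat \<Rightarrow> nat" where
  "pair i j = prod_encode (i, j)"

definition Gamma :: "nat \<Rightarrow> nat set \<Rightarrow> nat set" where
  "Gamma i A = {n. \<exists>d. pair n d \<in> W i \<and> set_decode d \<subseteq> A}"

definition e_reducible :: "nat set \<Rightarrow> nat set \<Rightarrow> bool" where
  "e_reducible A B \<longleftrightarrow> (\<exists>i. A = Gamma i B)"

definition e_equiv :: "nat set \<Rightarrow> nat set \<Rightarrow> bool" where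
  "e_equiv A B \<longleftrightarrow> e_reducible A B \<and> e_reducible B A"

definition e_equiv_via :: "nat set \<Rightarrow> nat set \<Rightarrow> nat \<Rightarrow> bool" where
  "e_equiv_via A B p \<longleftrightarrow> Gamma (fst (prod_decode p)) A = B \<and> Gamma (snd (prod_decode p)) B = A"

definition closed_under_e_equiv :: "nat set set \<Rightarrow> bool" where
  "closed_under_e_equiv X \<longleftrightarrow> (\<forall>A B. A \<in> X \<longrightarrow> e_equiv A B \<longrightarrow> B \<in> X)"

definition uniformity_function :: "nat set set \<Rightarrow> (nat set \<Rightarrow> nat set) \<Rightarrow> (nat \<Rightarrow> nat) \<Rightarrow> bool" where
  "uniformity_function X f u \<longleftrightarrow>
     (\<forall>A \<in> X. \<forall>B \<in> X. \<forall>i j. e_equiv_via A B (pair i j) \<longrightarrow> e_equiv_via (f A) (f B) (u (pair i j)))"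

definition uniformly_e_invariant :: "nat set set \<Rightarrow> (nat set \<Rightarrow> nat set) \<Rightarrow> bool" where
  "uniformly_e_invariant X f \<longleftrightarrow> (\<exists>u. uniformity_function X f u)"

end

theory Submission
  imports Defs
begin

text \<open>Fix any uniformity function \<open>u\<close> of \<open>f\<close>. Writing \<open>A \<oplus> {c}\<close> for the join of \<open>A\<close> with
  \<open>{c}\<close>, there are fixed enumeration operators taking \<open>A\<close> to \<open>A \<oplus> {0}\<close> and back, \<open>A \<oplus> {c}\<close>
  to \<open>A \<oplus> {c + 1}\<close> and back, and a single operator taking \<open>A \<oplus> {\<langle>i, j\<rangle>}\<close> to
  \<open>\<Gamma>\<^sub>i(A) \<oplus> {\<langle>j, i\<rangle>}\<close>. If \<open>A \<equiv>\<^sub>e B\<close> via \<open>\<langle>i, j\<rangle>\<close>, then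
  \<open>A, A \<oplus> {0}, \<dots>, A \<oplus> {\<langle>i, j\<rangle>}, B \<oplus> {\<langle>j, i\<rangle>}, \<dots>, B \<oplus> {0}, B\<close>
  is a chain of equivalences via these fixed operators, all inside the class, so applying \<open>u\<close>
  to the links gives five indices \<open>a\<^sub>0, a\<^sub>1, a\<^sub>2, b\<^sub>1, b\<^sub>0\<close>, independent of \<open>A\<close>, \<open>B\<close>, \<open>i\<close>, \<open>j\<close>, with
  \<open>f(B) = \<Gamma>\<^bsub>b\<^sub>0\<^esub> \<Gamma>\<^bsub>b\<^sub>1\<^esub>\<^bsup>\<langle>j, i\<rangle>\<^esup> \<Gamma>\<^bsub>a\<^sub>2\<^esub> \<Gamma>\<^bsub>a\<^sub>1\<^esub>\<^bsup>\<langle>i, j\<rangle>\<^esup> \<Gamma>\<^bsub>a\<^sub>0\<^esub> f(A)\<close>.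
  The graph of this composite is c.e. uniformly in \<open>\<langle>i, j\<rangle>\<close>, since membership in \<open>W i\<close> is
  witnessed by a finite derivation of a program run, coded by a single number; by
  parametrisation an index of the composite is a computable function of \<open>\<langle>i, j\<rangle>\<close>.\<close>

lemma eval_deterministic: "eval r xs y \<Longrightarrow> eval r xs y' \<Longrightarrow> y = y'"
proof (induction arbitrary: y' rule: eval.induct)
  case (eval_Cn ys gs xs f y)
  from eval_Cn.prems obtain ys' where l: "length ys' = length gs"
    and a: "\<forall>i<length gs. eval (gs ! i) xs (ys' ! i)" and b: "eval f ys' y'"
    by (cases rule: eval.cases) auto
  have "ys = ys'"
    by (rule nth_equalityI) (use eval_Cn.hyps(1) eval_Cn.IH(1) l a in auto)
  then show ?case using eval_Cn.IH(2) b by blast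
next
  case (eval_PrS f g n xs z y)
  from eval_PrS.prems obtain z' where "eval (Pr f g) (n # xs) z'" "eval g (n # z' # xs) y'"
    by (cases rule: eval.cases) auto
  then show ?case using eval_PrS.IH by metis
next
  case (eval_Mn f n xs)
  from eval_Mn.prems have "eval f (y' # xs) 0" and "\<forall>m<y'. \<exists>y. eval f (m # xs) y \<and> y \<noteq> 0"
    by (cases rule: eval.cases; auto)+
  then show ?case
    using eval_Mn.IH by (metis linorder_less_linear)
next
  case (eval_Pr0 f xs y g)
  from eval_Pr0.prems show ?case using eval_Pr0.IH by (cases rule: eval.cases) auto
next
  case (eval_Pr0_nil f y g)
  from eval_Pr0_nil.prems show ?case using eval_Pr0_nil.IH by (cases rule: eval.cases) auto
qed (erule eval.cases; simp)+

lemma code_inj: "code r = code r' \<Longrightarrow> r = r'"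
proof (induction r arbitrary: r')
  case (Cn f gs)
  show ?case
  proof (cases r')
    case (Cn f' gs')
    with Cn.prems have "code f = code f'" "map code gs = map code gs'"
      by (auto simp: list_encode_eq)
    then show ?thesis using Cn Cn.IH by (metis list.inj_map_strong)
  qed (use Cn.prems in auto)
qed (case_tac r'; simp)+

lemma W_code: "W (code r) = {n. \<exists>y. eval r [n] y}"
proof -
  have "(THE r'. code r' = code r) = r" using code_inj by (auto intro!: the_equality)
  then show ?thesis unfolding W_def by auto
qed

lemma eval_Cn_unary: "eval g xs a \<Longrightarrow> eval f [a] y \<Longrightarrow> eval (Cn f [g]) xs y"
  by (rule eval_Cn[where ys="[a]"]) auto

lemma eval_Cn_binary:
  "eval g1 xs a \<Longrightarrow> eval g2 xs b \<Longrightarrow> eval f [a, b] y \<Longrightarrow> eval (Cn f [g1, g2]) xs y"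
  by (rule eval_Cn[where ys="[a, b]"]) (auto simp: less_Suc_eq nth_Cons')

lemma eval_Pr_rec_nat:
  assumes "eval f xs b" and "\<And>m z. eval g (m # z # xs) (G m z)"
  shows "eval (Pr f g) (n # xs) (rec_nat b G n)"
  by (induction n) (use assms in \<open>auto intro: eval_Pr0 eval_PrS\<close>)

lemma eval_ZI: "y = 0 \<Longrightarrow> eval Z xs y"
  using eval_Z by metis

lemma eval_SI: "y = Suc (arg xs 0) \<Longrightarrow> eval S xs y"
  using eval_S by metis

lemma eval_IdI: "y = arg xs k \<Longrightarrow> eval (Id k) xs y"
  using eval_Id by metis

fun const_prog :: "nat \<Rightarrow> recf" where
  "const_prog 0 = Z"
| "const_prog (Suc c) = Cn S [const_prog c]"

declare const_prog.simps [simp del]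

lemma eval_const_prog: "y = c \<Longrightarrow> eval (const_prog c) xs y"
  by (induction c arbitrary: y) (auto intro!: eval_ZI eval_Cn_unary eval_SI simp: const_prog.simps arg_def)

definition add_prog :: recf where
  "add_prog = Pr (Id 0) (Cn S [Id 1])"

lemma eval_add_prog: "y = a + b \<Longrightarrow> eval add_prog [a, b] y"
proof -
  have "eval add_prog [a, b] (rec_nat b (\<lambda>m z. Suc z) a)"
    unfolding add_prog_def by (rule eval_Pr_rec_nat) (auto intro!: eval_IdI eval_Cn_unary eval_SI simp: arg_def)
  moreover have "rec_nat b (\<lambda>m z. Suc z) a = a + b" by (induction a) auto
  ultimately show "y = a + b \<Longrightarrow> eval add_prog [a, b] y" by simp
qed

definition mul_prog :: recf where
  "mul_prog = Pr Z (Cn add_prog [Id 1, Id 2])"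

lemma eval_mul_prog: "y = a * b \<Longrightarrow> eval mul_prog [a, b] y"
proof -
  have "eval mul_prog [a, b] (rec_nat 0 (\<lambda>m z. z + b) a)"
    unfolding mul_prog_def
    by (rule eval_Pr_rec_nat) (auto intro!: eval_ZI eval_IdI eval_Cn_binary eval_add_prog simp: arg_def)
  moreover have "rec_nat 0 (\<lambda>m z. z + b) a = a * b" by (induction a) auto
  ultimately show "y = a * b \<Longrightarrow> eval mul_prog [a, b] y" by simp
qed

definition pred_prog :: recf where
  "pred_prog = Pr Z (Id 0)"

lemma eval_pred_prog: "y = a - 1 \<Longrightarrow> eval pred_prog [a] y"
proof -
  have "eval pred_prog [a] (rec_nat 0 (\<lambda>m z. m) a)"
    unfolding pred_prog_def by (rule eval_Pr_rec_nat) (auto intro!: eval_ZI eval_IdI simp: arg_def)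
  moreover have "rec_nat 0 (\<lambda>m z. m) a = a - 1" by (cases a) auto
  ultimately show "y = a - 1 \<Longrightarrow> eval pred_prog [a] y" by simp
qed

definition sub_prog :: recf where
  "sub_prog = Cn (Pr (Id 0) (Cn pred_prog [Id 1])) [Id 1, Id 0]"

lemma eval_sub_prog: "y = a - b \<Longrightarrow> eval sub_prog [a, b] y"
proof -
  have "eval (Pr (Id 0) (Cn pred_prog [Id 1])) [b, a] (rec_nat a (\<lambda>m z. z - 1) b)"
    by (rule eval_Pr_rec_nat) (auto intro!: eval_IdI eval_Cn_unary eval_pred_prog simp: arg_def)
  moreover have "rec_nat a (\<lambda>m z. z - 1) b = a - b" by (induction b) auto
  ultimately show "y = a - b \<Longrightarrow> eval sub_prog [a, b] y"
    unfolding sub_prog_def by (auto intro!: eval_Cn_binary eval_IdI simp: arg_def)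
qed

definition sgn_prog :: recf where
  "sgn_prog = Cn sub_prog [const_prog 1, Cn sub_prog [const_prog 1, Id 0]]"

lemma eval_sgn_prog: "y = of_bool (a \<noteq> 0) \<Longrightarrow> eval sgn_prog [a] y"
  unfolding sgn_prog_def
  by (auto intro!: eval_Cn_binary eval_const_prog eval_IdI eval_sub_prog simp: arg_def)

definition pow2_prog :: recf where
  "pow2_prog = Pr (const_prog 1) (Cn add_prog [Id 1, Id 1])"

lemma eval_pow2_prog: "y = 2 ^ a \<Longrightarrow> eval pow2_prog [a] y"
proof -
  have "eval pow2_prog [a] (rec_nat 1 (\<lambda>m z. z + z) a)"
    unfolding pow2_prog_def
    by (rule eval_Pr_rec_nat) (auto intro!: eval_const_prog eval_IdI eval_Cn_binary eval_add_prog simp: arg_def)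
  moreover have "rec_nat 1 (\<lambda>m z. z + z) a = (2::nat) ^ a" by (induction a) auto
  ultimately show "y = 2 ^ a \<Longrightarrow> eval pow2_prog [a] y" by simp
qed

definition triangle_prog :: recf where
  "triangle_prog = Pr Z (Cn add_prog [Id 1, Cn S [Id 0]])"

lemma eval_triangle_prog: "y = triangle a \<Longrightarrow> eval triangle_prog [a] y"
proof -
  have "eval triangle_prog [a] (rec_nat 0 (\<lambda>m z. z + Suc m) a)"
    unfolding triangle_prog_def
    by (rule eval_Pr_rec_nat)
      (auto intro!: eval_ZI eval_IdI eval_Cn_binary eval_Cn_unary eval_SI eval_add_prog simp: arg_def)
  moreover have "rec_nat 0 (\<lambda>m z. z + Suc m) a = triangle a" by (induction a) auto
  ultimately show "y = triangle a \<Longrightarrow> eval triangle_prog [a] y" by simp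
qed

definition prod_encode_prog :: recf where
  "prod_encode_prog = Cn add_prog [Cn triangle_prog [Cn add_prog [Id 0, Id 1]], Id 0]"

lemma eval_prod_encode_prog: "y = prod_encode (a, b) \<Longrightarrow> eval prod_encode_prog [a, b] y"
  unfolding prod_encode_prog_def prod_encode_def
  by (auto intro!: eval_Cn_binary eval_Cn_unary eval_IdI eval_add_prog eval_triangle_prog simp: arg_def)

definition eq_prog :: recf where
  "eq_prog = Cn sub_prog [const_prog 1,
     Cn sgn_prog [Cn add_prog [Cn sub_prog [Id 0, Id 1], Cn sub_prog [Id 1, Id 0]]]]"

lemma eval_eq_prog: "y = of_bool (a = b) \<Longrightarrow> eval eq_prog [a, b] y"
  unfolding eq_prog_def
  by (auto intro!: eval_Cn_binary eval_Cn_unary eval_const_prog eval_IdI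
      eval_sub_prog eval_sgn_prog eval_add_prog simp: arg_def)

definition less_prog :: recf where
  "less_prog = Cn sgn_prog [Cn sub_prog [Id 1, Id 0]]"

lemma eval_less_prog: "y = of_bool (a < b) \<Longrightarrow> eval less_prog [a, b] y"
  unfolding less_prog_def
  by (auto intro!: eval_Cn_binary eval_Cn_unary eval_IdI eval_sub_prog eval_sgn_prog simp: arg_def)

definition not_prog :: recf where
  "not_prog = Cn sub_prog [const_prog 1, Id 0]"

lemma eval_not_prog: "y = of_bool (\<not> P) \<Longrightarrow> eval not_prog [of_bool P] y"
  unfolding not_prog_def by (auto intro!: eval_Cn_binary eval_const_prog eval_IdI eval_sub_prog simp: arg_def)

definition or_prog :: recf where
  "or_prog = Cn sgn_prog [Cn add_prog [Id 0, Id 1]]"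

lemma eval_or_prog: "y = of_bool (a + b \<noteq> 0) \<Longrightarrow> eval or_prog [a, b] y"
  unfolding or_prog_def
  by (auto intro!: eval_Cn_binary eval_Cn_unary eval_IdI eval_add_prog eval_sgn_prog simp: arg_def)

definition const_code_prog :: recf where
  "const_code_prog = Pr (const_prog (code Z))
     (Cn prod_encode_prog [const_prog 3, Cn prod_encode_prog [const_prog (code S),
        Cn S [Cn prod_encode_prog [Id 1, Z]]]])"

lemma eval_const_code_prog: "y = code (const_prog a) \<Longrightarrow> eval const_code_prog [a] y"
proof -
  let ?step = "\<lambda>m z. prod_encode (3, prod_encode (code S, Suc (prod_encode (z, 0))))"
  have "eval const_code_prog [a] (rec_nat (code Z) ?step a)"
    unfolding const_code_prog_def
    by (rule eval_Pr_rec_nat)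
      (auto intro!: eval_const_prog eval_Cn_binary eval_Cn_unary eval_SI eval_prod_encode_prog
        eval_IdI eval_ZI simp: arg_def)
  moreover have "rec_nat (code Z) ?step a = code (const_prog a)"
    by (induction a) (auto simp: const_prog.simps)
  ultimately show "y = code (const_prog a) \<Longrightarrow> eval const_code_prog [a] y" by simp
qed

section \<open>Arithmetical formulas with bounded quantifiers\<close>

datatype tm = V nat | N nat | Sc tm | Pl tm tm | Ml tm tm | P2 tm | Pe tm tm | ConstCode tm

primrec tval :: "(nat \<Rightarrow> nat) \<Rightarrow> tm \<Rightarrow> nat" where
  "tval s (V x) = s x"
| "tval s (N c) = c"
| "tval s (Sc t) = Suc (tval s t)"
| "tval s (Pl a b) = tval s a + tval s b"
| "tval s (Ml a b) = tval s a * tval s b"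
| "tval s (P2 a) = 2 ^ tval s a"
| "tval s (Pe a b) = prod_encode (tval s a, tval s b)"
| "tval s (ConstCode a) = code (const_prog (tval s a))"

primrec tm_vars :: "tm \<Rightarrow> nat set" where
  "tm_vars (V x) = {x}"
| "tm_vars (N c) = {}"
| "tm_vars (Sc t) = tm_vars t"
| "tm_vars (Pl a b) = tm_vars a \<union> tm_vars b"
| "tm_vars (Ml a b) = tm_vars a \<union> tm_vars b"
| "tm_vars (P2 a) = tm_vars a"
| "tm_vars (Pe a b) = tm_vars a \<union> tm_vars b"
| "tm_vars (ConstCode a) = tm_vars a"

lemma tval_upd [simp]: "x \<notin> tm_vars t \<Longrightarrow> tval (s(x := v)) t = tval s t"
  by (induction t) auto

datatype fm = Eq tm tm | Lt tm tm | Neg fm | Conj fm fm | Disj fm fm | BEx nat tm fm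

primrec holds :: "(nat \<Rightarrow> nat) \<Rightarrow> fm \<Rightarrow> bool" where
  "holds s (Eq a b) = (tval s a = tval s b)"
| "holds s (Lt a b) = (tval s a < tval s b)"
| "holds s (Neg p) = (\<not> holds s p)"
| "holds s (Conj p q) = (holds s p \<and> holds s q)"
| "holds s (Disj p q) = (holds s p \<or> holds s q)"
| "holds s (BEx x b p) = (\<exists>v < tval s b. holds (s(x := v)) p)"

definition BAll :: "nat \<Rightarrow> tm \<Rightarrow> fm \<Rightarrow> fm" where
  "BAll x b p = Neg (BEx x b (Neg p))"

definition Imp :: "fm \<Rightarrow> fm \<Rightarrow> fm" where
  "Imp p q = Disj (Neg p) q"

lemma holds_BAll [simp]: "holds s (BAll x b p) \<longleftrightarrow> (\<forall>v < tval s b. holds (s(x := v)) p)"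
  by (auto simp: BAll_def)

lemma holds_Imp [simp]: "holds s (Imp p q) \<longleftrightarrow> (holds s p \<longrightarrow> holds s q)"
  by (auto simp: Imp_def)

text \<open>A program compiled for the variable list \<open>ctx\<close> reads variable \<open>ctx ! k\<close> from its
  \<open>k\<close>-th argument.\<close>

primrec var_index :: "nat list \<Rightarrow> nat \<Rightarrow> nat" where
  "var_index [] x = 0"
| "var_index (y # ys) x = (if x = y then 0 else Suc (var_index ys x))"

definition env_assign :: "nat list \<Rightarrow> nat list \<Rightarrow> nat \<Rightarrow> nat" where
  "env_assign ctx env x = arg env (var_index ctx x)"

lemma env_assign_Cons: "env_assign (x # ctx) (m # env) = (env_assign ctx env)(x := m)"
  by (rule ext) (auto simp: env_assign_def arg_def)

primrec compile_tm :: "nat list \<Rightarrow> tm \<Rightarrow> recf" where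
  "compile_tm ctx (V x) = Id (var_index ctx x)"
| "compile_tm ctx (N c) = const_prog c"
| "compile_tm ctx (Sc t) = Cn S [compile_tm ctx t]"
| "compile_tm ctx (Pl a b) = Cn add_prog [compile_tm ctx a, compile_tm ctx b]"
| "compile_tm ctx (Ml a b) = Cn mul_prog [compile_tm ctx a, compile_tm ctx b]"
| "compile_tm ctx (P2 a) = Cn pow2_prog [compile_tm ctx a]"
| "compile_tm ctx (Pe a b) = Cn prod_encode_prog [compile_tm ctx a, compile_tm ctx b]"
| "compile_tm ctx (ConstCode a) = Cn const_code_prog [compile_tm ctx a]"

lemma eval_compile_tm: "eval (compile_tm ctx t) env (tval (env_assign ctx env) t)"
  by (induction t)
    (auto intro!: eval_IdI eval_const_prog eval_Cn_unary eval_Cn_binary eval_SI eval_add_prog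
      eval_mul_prog eval_pow2_prog eval_prod_encode_prog eval_const_code_prog
      simp: env_assign_def arg_def)

text \<open>A bounded quantifier becomes a primitive recursion over the bound that accumulates
  the disjunction of the instances.\<close>

primrec compile_fm :: "nat list \<Rightarrow> fm \<Rightarrow> recf" where
  "compile_fm ctx (Eq a b) = Cn eq_prog [compile_tm ctx a, compile_tm ctx b]"
| "compile_fm ctx (Lt a b) = Cn less_prog [compile_tm ctx a, compile_tm ctx b]"
| "compile_fm ctx (Neg p) = Cn not_prog [compile_fm ctx p]"
| "compile_fm ctx (Conj p q) = Cn mul_prog [compile_fm ctx p, compile_fm ctx q]"
| "compile_fm ctx (Disj p q) = Cn or_prog [compile_fm ctx p, compile_fm ctx q]"
| "compile_fm ctx (BEx x b p) =
     Cn (Pr Z (Cn or_prog [Id 1, Cn (compile_fm (x # ctx) p) (Id 0 # map (\<lambda>i. Id (i + 2)) [0..<length ctx])]))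
       (compile_tm ctx b # map Id [0..<length ctx])"

lemma eval_Cn_skip_second:
  assumes "eval f (m # env) y"
  shows "eval (Cn f (Id 0 # map (\<lambda>i. Id (i + 2)) [0..<length env])) (m # z # env) y"
  by (rule eval_Cn[where ys="m # env"]) (use assms in \<open>auto intro!: eval_IdI simp: nth_Cons' arg_def\<close>)

lemma eval_Cn_push:
  assumes "eval g env a" "eval f (a # env) y"
  shows "eval (Cn f (g # map Id [0..<length env])) env y"
  by (rule eval_Cn[where ys="a # env"]) (use assms in \<open>auto intro!: eval_IdI simp: nth_Cons' arg_def\<close>)

lemma eval_compile_fm:
  "length env = length ctx \<Longrightarrow> eval (compile_fm ctx p) env (of_bool (holds (env_assign ctx env) p))"
proof (induction p arbitrary: ctx env)
  case (BEx x b p)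
  let ?s = "env_assign ctx env"
  let ?body = "Cn or_prog [Id 1, Cn (compile_fm (x # ctx) p) (Id 0 # map (\<lambda>i. Id (i + 2)) [0..<length ctx])]"
  let ?step = "\<lambda>m z. of_bool (z + of_bool (holds (?s(x := m)) p) \<noteq> 0) :: nat"
  have "eval ?body (m # z # env) (?step m z)" for m z
  proof (rule eval_Cn_binary[OF eval_IdI])
    show "eval (Cn (compile_fm (x # ctx) p) (Id 0 # map (\<lambda>i. Id (i + 2)) [0..<length ctx])) (m # z # env)
        (of_bool (holds (?s(x := m)) p))"
      using eval_Cn_skip_second[OF BEx.IH[of "m # env" "x # ctx"]] BEx.prems
      by (simp add: env_assign_Cons fun_upd_def)
  qed (auto intro: eval_or_prog simp: arg_def)
  then have "eval (Pr Z ?body) (tval ?s b # env) (rec_nat 0 ?step (tval ?s b))"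
    by (intro eval_Pr_rec_nat eval_ZI) simp
  moreover have "rec_nat 0 ?step n = of_bool (\<exists>v<n. holds (?s(x := v)) p)" for n
    by (induction n) (auto simp: less_Suc_eq)
  ultimately have "eval (Pr Z ?body) (tval ?s b # env) (of_bool (\<exists>v<tval ?s b. holds (?s(x := v)) p))"
    by metis
  then have "eval (Cn (Pr Z ?body) (compile_tm ctx b # map Id [0..<length env])) env
      (of_bool (\<exists>v<tval ?s b. holds (?s(x := v)) p))"
    by (rule eval_Cn_push[OF eval_compile_tm])
  then show ?case by (simp only: compile_fm.simps holds.simps BEx.prems)
qed (auto intro!: eval_Cn_binary eval_Cn_unary eval_compile_tm eval_eq_prog eval_less_prog
    eval_not_prog eval_or_prog eval_mul_prog)

definition assign2 :: "nat \<Rightarrow> nat \<Rightarrow> nat \<Rightarrow> nat" where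
  "assign2 x y = (\<lambda>_. 0)(0 := x, 1 := y)"

lemma assign2_simps [simp]: "assign2 x y 0 = x" "assign2 x y (Suc 0) = y"
  by (simp_all add: assign2_def)

lemma eval_not_compile_fm:
  "eval (Cn not_prog [compile_fm [1, 0] p]) [y, x] (of_bool (\<not> holds (assign2 x y) p))"
proof -
  have "env_assign [1, 0] [y, x] = assign2 x y"
    by (rule ext) (auto simp: env_assign_def arg_def assign2_def)
  then have "eval (compile_fm [1, 0] p) [y, x] (of_bool (holds (assign2 x y) p))"
    using eval_compile_fm[of "[y, x]" "[1, 0]" p] by simp
  then show ?thesis by (rule eval_Cn_unary) (rule eval_not_prog, simp)
qed

lemma sigma1_W_code:
  assumes "\<And>x. x \<in> A \<longleftrightarrow> (\<exists>y. holds (assign2 x y) p)"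
  shows "\<exists>r. W (code r) = A"
proof -
  let ?f = "Cn not_prog [compile_fm [1, 0] p]"
  have "(\<exists>y. eval (Mn ?f) [x] y) \<longleftrightarrow> x \<in> A" for x
  proof
    assume "\<exists>y. eval (Mn ?f) [x] y"
    then obtain n where "eval (Mn ?f) [x] n" by blast
    then have "eval ?f [n, x] 0" by (cases rule: eval.cases) auto
    then have "holds (assign2 x n) p"
      using eval_deterministic[OF eval_not_compile_fm] by fastforce
    then show "x \<in> A" using assms by blast
  next
    assume "x \<in> A"
    then have ex: "\<exists>y. holds (assign2 x y) p" using assms by blast
    let ?n = "LEAST y. holds (assign2 x y) p"
    have "eval ?f [?n, x] 0"
      using eval_not_compile_fm[of p ?n x] LeastI_ex[OF ex] by simp
    moreover have "eval ?f [m, x] 1" if "m < ?n" for m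
      using eval_not_compile_fm[of p m x] not_less_Least[OF that] by simp
    ultimately have "eval (Mn ?f) [x] ?n"
      by (intro eval_Mn) auto
    then show "\<exists>y. eval (Mn ?f) [x] y" by blast
  qed
  then have "W (code (Mn ?f)) = A" unfolding W_code by blast
  then show ?thesis by blast
qed

lemma computable_if_graph_definable:
  assumes "\<And>x y. holds (assign2 x y) p \<longleftrightarrow> y = F x"
  shows "computable F"
proof -
  have "eval (Mn (Cn not_prog [compile_fm [1, 0] p])) [x] (F x)" for x
  proof (intro eval_Mn allI impI exI conjI)
    show "eval (Cn not_prog [compile_fm [1, 0] p]) [F x, x] 0"
      using eval_not_compile_fm[of p "F x" x] assms by simp
    show "eval (Cn not_prog [compile_fm [1, 0] p]) [m, x] 1" if "m < F x" for m
      using eval_not_compile_fm[of p m x] assms that by simp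
  qed simp
  then show ?thesis unfolding computable_def by blast
qed

section \<open>A universal enumeration by finite derivations\<close>

abbreviation pe :: "nat \<Rightarrow> nat \<Rightarrow> nat" where "pe a b \<equiv> prod_encode (a, b)"

text \<open>\<open>jdg k a b c\<close> codes one of five judgements, with argument lists coded by \<open>list_encode\<close>:
  \<open>k = 0\<close>: the program coded by \<open>a\<close> maps the arguments \<open>b\<close> to \<open>c\<close>;
  \<open>k = 1\<close>: the programs coded by the list \<open>a\<close> map \<open>b\<close> to the list \<open>c\<close>;
  \<open>k = 2\<close>: \<open>c = arg (list_decode a) b\<close>;
  \<open>k = 3\<close>, \<open>k = 4\<close>: \<open>a\<close> is the code of a program, of a list of programs.
  Since finite sets of judgements closed under the rules are coded by single numbers,
  membership in \<open>W i\<close> becomes an unbounded search over bounded properties.\<close>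

definition jdg :: "nat \<Rightarrow> nat \<Rightarrow> nat \<Rightarrow> nat \<Rightarrow> nat" where
  "jdg k a b c = pe k (pe a (pe b c))"

lemma jdg_eq_iff [simp]: "jdg k a b c = jdg k' a' b' c' \<longleftrightarrow> k = k' \<and> a = a' \<and> b = b' \<and> c = c'"
  by (auto simp: jdg_def)

definition eval_rule :: "nat set \<Rightarrow> nat \<Rightarrow> nat \<Rightarrow> nat \<Rightarrow> bool" where
  "eval_rule X a l y \<longleftrightarrow>
     (a = pe 0 0 \<and> y = 0)
   \<or> (a = pe 1 0 \<and> (\<exists>v. jdg 2 l 0 v \<in> X \<and> y = Suc v))
   \<or> (\<exists>k. a = pe 2 k \<and> jdg 2 l k y \<in> X)
   \<or> (\<exists>cf lg. a = pe 3 (pe cf lg) \<and> (\<exists>ly. jdg 1 lg l ly \<in> X \<and> jdg 0 cf ly y \<in> X))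
   \<or> (\<exists>cf cg. a = pe 4 (pe cf cg) \<and>
        ((l = 0 \<and> jdg 0 cf 0 y \<in> X \<and> jdg 3 a 0 0 \<in> X)
       \<or> (\<exists>l'. l = Suc (pe 0 l') \<and> jdg 0 cf l' y \<in> X \<and> jdg 3 a 0 0 \<in> X)
       \<or> (\<exists>n l'. l = Suc (pe (Suc n) l') \<and>
            (\<exists>z. jdg 0 a (Suc (pe n l')) z \<in> X \<and> jdg 0 cg (Suc (pe n (Suc (pe z l')))) y \<in> X))))
   \<or> (\<exists>cf. a = pe 5 cf \<and> jdg 0 cf (Suc (pe y l)) 0 \<in> X \<and>
        (\<forall>m<y. \<exists>v. v \<noteq> 0 \<and> jdg 0 cf (Suc (pe m l)) v \<in> X))"

definition evals_rule :: "nat set \<Rightarrow> nat \<Rightarrow> nat \<Rightarrow> nat \<Rightarrow> bool" where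
  "evals_rule X lg l ly \<longleftrightarrow> (lg = 0 \<and> ly = 0) \<or>
     (\<exists>g lg' y ly'. lg = Suc (pe g lg') \<and> ly = Suc (pe y ly') \<and> jdg 0 g l y \<in> X \<and> jdg 1 lg' l ly' \<in> X)"

definition arg_rule :: "nat set \<Rightarrow> nat \<Rightarrow> nat \<Rightarrow> nat \<Rightarrow> bool" where
  "arg_rule X l k v \<longleftrightarrow> (l = 0 \<and> v = 0) \<or>
     (\<exists>x l'. l = Suc (pe x l') \<and> ((k = 0 \<and> v = x) \<or> (\<exists>k'. k = Suc k' \<and> jdg 2 l' k' v \<in> X)))"

definition code_rule :: "nat set \<Rightarrow> nat \<Rightarrow> bool" where
  "code_rule X c \<longleftrightarrow> c = pe 0 0 \<or> c = pe 1 0 \<or> (\<exists>k. c = pe 2 k)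
     \<or> (\<exists>cf lg. c = pe 3 (pe cf lg) \<and> jdg 3 cf 0 0 \<in> X \<and> jdg 4 lg 0 0 \<in> X)
     \<or> (\<exists>cf cg. c = pe 4 (pe cf cg) \<and> jdg 3 cf 0 0 \<in> X \<and> jdg 3 cg 0 0 \<in> X)
     \<or> (\<exists>cf. c = pe 5 cf \<and> jdg 3 cf 0 0 \<in> X)"

definition codes_rule :: "nat set \<Rightarrow> nat \<Rightarrow> bool" where
  "codes_rule X lg \<longleftrightarrow> lg = 0 \<or> (\<exists>g lg'. lg = Suc (pe g lg') \<and> jdg 3 g 0 0 \<in> X \<and> jdg 4 lg' 0 0 \<in> X)"

definition justified :: "nat set \<Rightarrow> nat \<Rightarrow> nat \<Rightarrow> nat \<Rightarrow> nat \<Rightarrow> bool" where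
  "justified X k a b c \<longleftrightarrow> (k = 0 \<and> eval_rule X a b c) \<or> (k = 1 \<and> evals_rule X a b c) \<or> (k = 2 \<and> arg_rule X a b c)
     \<or> (k = 3 \<and> b = 0 \<and> c = 0 \<and> code_rule X a) \<or> (k = 4 \<and> b = 0 \<and> c = 0 \<and> codes_rule X a)"

definition derivation_set :: "nat set \<Rightarrow> bool" where
  "derivation_set X \<longleftrightarrow> (\<forall>q\<in>X. \<exists>k a b c. q = jdg k a b c \<and> justified X k a b c)"

lemma derivation_setD: "derivation_set X \<Longrightarrow> jdg k a b c \<in> X \<Longrightarrow> justified X k a b c"
  unfolding derivation_set_def by fastforce

lemma prod_encode_less_2: "0 < a \<Longrightarrow> b < pe a b"
proof -
  assume "0 < a"
  have t: "n \<le> triangle n" for n by (induction n) auto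
  have "a + b \<le> triangle (a + b)" by (rule t)
  then show ?thesis using \<open>0 < a\<close> by (simp add: prod_encode_def)
qed

lemma prod_encode_tag_less:
  assumes "0 < k" shows "x < pe k (pe x z)" "z < pe k (pe x z)"
  using prod_encode_less_2[OF assms] le_prod_encode_1 le_prod_encode_2 le_less_trans by blast+

lemma derivation_arg_sound: "derivation_set X \<Longrightarrow> jdg 2 l k v \<in> X \<Longrightarrow> v = arg (list_decode l) k"
proof (induction l arbitrary: k v rule: less_induct)
  case (less l)
  have "arg_rule X l k v" using derivation_setD[OF less.prems] by (simp add: justified_def)
  then consider "l = 0" "v = 0" | x l' where "l = Suc (pe x l')" "k = 0" "v = x"
    | x l' k' where "l = Suc (pe x l')" "k = Suc k'" "jdg 2 l' k' v \<in> X"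
    unfolding arg_rule_def by blast
  then show ?case
  proof cases
    case 1 then show ?thesis by (simp add: arg_def)
  next
    case 2 then show ?thesis by (simp add: arg_def)
  next
    case 3
    have "l' < l" using 3 le_prod_encode_2[of l' x] by simp
    with less.IH[OF this less.prems(1) 3(3)] 3 show ?thesis by (simp add: arg_def)
  qed
qed

lemma derivation_code_sound: "derivation_set X \<Longrightarrow> (jdg 3 a 0 0 \<in> X \<longrightarrow> (\<exists>r. code r = a)) \<and> (jdg 4 a 0 0 \<in> X \<longrightarrow> (\<exists>rs. list_encode (map code rs) = a))"
proof (induction a rule: less_induct)
  case (less a)
  have c3: "\<exists>r. code r = a" if "jdg 3 a 0 0 \<in> X"
  proof -
    have "code_rule X a" using derivation_setD[OF less.prems that] by (simp add: justified_def)
    then consider "a = pe 0 0" | "a = pe 1 0" | k where "a = pe 2 k"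
      | cf lg where "a = pe 3 (pe cf lg)" "jdg 3 cf 0 0 \<in> X" "jdg 4 lg 0 0 \<in> X"
      | cf cg where "a = pe 4 (pe cf cg)" "jdg 3 cf 0 0 \<in> X" "jdg 3 cg 0 0 \<in> X"
      | cf where "a = pe 5 cf" "jdg 3 cf 0 0 \<in> X"
      unfolding code_rule_def by blast
    then show ?thesis
    proof cases
      case 1 then show ?thesis by (metis code.simps(1))
    next
      case 2 then show ?thesis by (metis code.simps(2))
    next
      case 3 then show ?thesis by (metis code.simps(3))
    next
      case 4
      have "cf < a" "lg < a" using 4 prod_encode_less_2[of 3] le_prod_encode_1 le_prod_encode_2 by (meson le_less_trans zero_less_numeral)+
      then obtain rf rs where "code rf = cf" "list_encode (map code rs) = lg"
        using less.IH less.prems 4 by blast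
      then show ?thesis using 4 by (metis code.simps(4))
    next
      case 5
      have "cf < a" "cg < a" using 5 prod_encode_less_2[of 4] le_prod_encode_1 le_prod_encode_2 by (meson le_less_trans zero_less_numeral)+
      then obtain rf rg where "code rf = cf" "code rg = cg"
        using less.IH less.prems 5 by blast
      then show ?thesis using 5 by (metis code.simps(5))
    next
      case 6
      have "cf < a" using 6 prod_encode_less_2[of 5] by simp
      then obtain rf where "code rf = cf" using less.IH less.prems 6 by blast
      then show ?thesis using 6 by (metis code.simps(6))
    qed
  qed
  have c4: "\<exists>rs. list_encode (map code rs) = a" if "jdg 4 a 0 0 \<in> X"
  proof -
    have "codes_rule X a" using derivation_setD[OF less.prems that] by (simp add: justified_def)
    then consider "a = 0" | g lg' where "a = Suc (pe g lg')" "jdg 3 g 0 0 \<in> X" "jdg 4 lg' 0 0 \<in> X"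
      unfolding codes_rule_def by blast
    then show ?thesis
    proof cases
      case 1 then show ?thesis by (metis list.simps(8) list_encode.simps(1))
    next
      case 2
      have "g < a" "lg' < a" using 2 le_prod_encode_1 le_prod_encode_2 by (simp add: le_imp_less_Suc)+
      then obtain r rs where "code r = g" "list_encode (map code rs) = lg'"
        using less.IH less.prems 2 by blast
      then show ?thesis using 2 by (metis list.simps(9) list_encode.simps(2))
    qed
  qed
  show ?case using c3 c4 by blast
qed

lemma code_eq_Pr: "code r = pe 4 (pe xf xg) \<Longrightarrow> \<exists>rf rg. r = Pr rf rg \<and> code rf = xf \<and> code rg = xg"
  by (cases r) auto

lemma eval_rule_Pr:
  assumes "eval_rule X a l y" "a = pe 4 (pe xf xg)"
  shows "(l = 0 \<and> jdg 0 xf 0 y \<in> X \<and> jdg 3 a 0 0 \<in> X)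
       \<or> (\<exists>l'. l = Suc (pe 0 l') \<and> jdg 0 xf l' y \<in> X \<and> jdg 3 a 0 0 \<in> X)
       \<or> (\<exists>n l' z. l = Suc (pe (Suc n) l') \<and>
            jdg 0 a (Suc (pe n l')) z \<in> X \<and> jdg 0 xg (Suc (pe n (Suc (pe z l')))) y \<in> X)"
  using assms unfolding eval_rule_def by auto

lemma derivation_Pr_code:
  assumes "derivation_set X" "a = pe 4 (pe xf xg)" "jdg 0 a l y \<in> X"
  shows "jdg 3 a 0 0 \<in> X"
  using assms(3)
proof (induction l arbitrary: y rule: less_induct)
  case (less l)
  have "eval_rule X a l y" using derivation_setD[OF assms(1) less.prems] by (simp add: justified_def)
  from eval_rule_Pr[OF this assms(2)] show ?case
  proof (elim disjE exE conjE)
    fix n l' z assume "l = Suc (pe (Suc n) l')" "jdg 0 a (Suc (pe n l')) z \<in> X"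
    moreover have "Suc (pe n l') < Suc (pe (Suc n) l')"
      by (simp add: prod_encode_def)
    ultimately show ?thesis using less.IH by blast
  qed
qed

lemma derivation_Pr_sound:
  assumes X: "derivation_set X" and a: "a = pe 4 (pe xf xg)" and "jdg 0 a l y \<in> X"
    and IHf: "\<And>l y. jdg 0 xf l y \<in> X \<Longrightarrow> \<exists>r. code r = xf \<and> eval r (list_decode l) y"
    and IHg: "\<And>l y. jdg 0 xg l y \<in> X \<Longrightarrow> \<exists>r. code r = xg \<and> eval r (list_decode l) y"
  shows "\<exists>r. code r = a \<and> eval r (list_decode l) y"
proof -
  obtain r where r: "code r = a"
    using derivation_code_sound[OF X] derivation_Pr_code[OF X a assms(3)] by blast
  then obtain rf rg where rfg: "r = Pr rf rg" "code rf = xf" "code rg = xg"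
    using code_eq_Pr a by blast
  have rule: "eval_rule X a l y" if "jdg 0 a l y \<in> X" for l y
    using derivation_setD[OF X that] by (simp add: justified_def)
  have f: "eval rf (list_decode l) y" if "jdg 0 xf l y \<in> X" for l y
    using IHf[OF that] rfg(2) code_inj by blast
  have g: "eval rg (list_decode l) y" if "jdg 0 xg l y \<in> X" for l y
    using IHg[OF that] rfg(3) code_inj by blast
  have step: "eval r (n # list_decode l') z" if "jdg 0 a (Suc (pe n l')) z \<in> X" for n l' z
    using that
  proof (induction n arbitrary: z)
    case 0
    then show ?case using eval_rule_Pr[OF rule[OF 0] a] f rfg(1) by (auto intro: eval_Pr0)
  next
    case (Suc n)
    then show ?case using eval_rule_Pr[OF rule[OF Suc.prems] a] g rfg(1) by (fastforce intro: eval_PrS)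
  qed
  have "eval r (list_decode l) y"
  proof (cases l)
    case 0
    then have "jdg 0 xf 0 y \<in> X" using eval_rule_Pr[OF rule[OF assms(3)] a] by simp
    then show ?thesis using f[of 0 y] rfg(1) 0 by (simp add: eval_Pr0_nil)
  next
    case (Suc l0)
    obtain n l' where "l0 = pe n l'" by (metis prod_decode_inverse surj_pair)
    then show ?thesis using step assms(3) Suc by simp
  qed
  then show ?thesis using r by blast
qed

lemma derivation_Mn_sound:
  assumes "jdg 0 xf (Suc (pe y l)) 0 \<in> X" "\<forall>m<y. \<exists>v. v \<noteq> 0 \<and> jdg 0 xf (Suc (pe m l)) v \<in> X"
    and IH: "\<And>l y. jdg 0 xf l y \<in> X \<Longrightarrow> \<exists>r. code r = xf \<and> eval r (list_decode l) y"
  shows "\<exists>r. code r = pe 5 xf \<and> eval r (list_decode l) y"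
proof -
  obtain rf where rf: "code rf = xf" "eval rf (y # list_decode l) 0"
    using IH[OF assms(1)] by auto
  have "\<exists>v. eval rf (m # list_decode l) v \<and> v \<noteq> 0" if "m < y" for m
    using assms(2) that IH rf(1) code_inj by fastforce
  then have "eval (Mn rf) (list_decode l) y" using rf by (auto intro: eval_Mn)
  then show ?thesis using rf by (metis code.simps(6))
qed

lemma derivation_eval_step:
  assumes X: "derivation_set X" and jdg: "jdg 0 a l y \<in> X"
    and IH0: "\<And>a' l y. a' < a \<Longrightarrow> jdg 0 a' l y \<in> X \<Longrightarrow> \<exists>r. code r = a' \<and> eval r (list_decode l) y"
    and IH1: "\<And>a' l ly. a' < a \<Longrightarrow> jdg 1 a' l ly \<in> X \<Longrightarrow> \<exists>rs ys. list_encode (map code rs) = a' \<and>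
       list_encode ys = ly \<and> list_all2 (\<lambda>r. eval r (list_decode l)) rs ys"
  shows "\<exists>r. code r = a \<and> eval r (list_decode l) y"
proof -
  have "eval_rule X a l y" using derivation_setD[OF X jdg] by (simp add: justified_def)
  then consider "a = pe 0 0" "y = 0" | v where "a = pe 1 0" "jdg 2 l 0 v \<in> X" "y = Suc v"
    | k where "a = pe 2 k" "jdg 2 l k y \<in> X"
    | xf lg ly where "a = pe 3 (pe xf lg)" "jdg 1 lg l ly \<in> X" "jdg 0 xf ly y \<in> X"
    | xf xg where "a = pe 4 (pe xf xg)"
    | xf where "a = pe 5 xf" "jdg 0 xf (Suc (pe y l)) 0 \<in> X"
        "\<forall>m<y. \<exists>v. v \<noteq> 0 \<and> jdg 0 xf (Suc (pe m l)) v \<in> X"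
    unfolding eval_rule_def by blast
  then show ?thesis
  proof cases
    case 1
    then show ?thesis by (metis code.simps(1) eval_Z)
  next
    case (2 v)
    then show ?thesis using derivation_arg_sound[OF X] by (metis code.simps(2) eval_S)
  next
    case (3 k)
    then show ?thesis using derivation_arg_sound[OF X] by (metis code.simps(3) eval_Id)
  next
    case (4 xf lg ly)
    obtain rs ys where rs: "list_encode (map code rs) = lg" "list_encode ys = ly"
      "list_all2 (\<lambda>r. eval r (list_decode l)) rs ys"
      using IH1[OF _ 4(2)] 4(1) prod_encode_tag_less[of 3] by auto
    obtain rf where rf: "code rf = xf" "eval rf (list_decode ly) y"
      using IH0[OF _ 4(3)] 4(1) prod_encode_tag_less[of 3] by auto
    have "eval (Cn rf rs) (list_decode l) y"
      using rs rf by (intro eval_Cn[where ys=ys]) (auto simp: list_all2_conv_all_nth)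
    then show ?thesis using 4 rs rf by (metis code.simps(4))
  next
    case (5 xf xg)
    show ?thesis
      by (rule derivation_Pr_sound[OF X 5 jdg]) (use IH0 5 prod_encode_tag_less[of 4] in auto)
  next
    case (6 xf)
    show ?thesis
      unfolding 6(1) by (rule derivation_Mn_sound[OF 6(2,3)]) (use IH0 6(1) prod_encode_less_2[of 5] in auto)
  qed
qed

lemma derivation_evals_step:
  assumes X: "derivation_set X" and jdg: "jdg 1 a l ly \<in> X"
    and IH0: "\<And>a' l y. a' < a \<Longrightarrow> jdg 0 a' l y \<in> X \<Longrightarrow> \<exists>r. code r = a' \<and> eval r (list_decode l) y"
    and IH1: "\<And>a' l ly. a' < a \<Longrightarrow> jdg 1 a' l ly \<in> X \<Longrightarrow> \<exists>rs ys. list_encode (map code rs) = a' \<and>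
       list_encode ys = ly \<and> list_all2 (\<lambda>r. eval r (list_decode l)) rs ys"
  shows "\<exists>rs ys. list_encode (map code rs) = a \<and> list_encode ys = ly \<and>
    list_all2 (\<lambda>r. eval r (list_decode l)) rs ys"
proof -
  have "evals_rule X a l ly" using derivation_setD[OF X jdg] by (simp add: justified_def)
  then consider "a = 0" "ly = 0"
    | g lg y ly' where "a = Suc (pe g lg)" "ly = Suc (pe y ly')" "jdg 0 g l y \<in> X" "jdg 1 lg l ly' \<in> X"
    unfolding evals_rule_def by blast
  then show ?thesis
  proof cases
    case 1
    then show ?thesis by (intro exI[of _ "[]"]) simp
  next
    case (2 g lg y ly')
    have "g < a" "lg < a" using 2 le_prod_encode_1 le_prod_encode_2 by (simp add: le_imp_less_Suc)+
    with 2 obtain rg rs ys where "code rg = g" "eval rg (list_decode l) y"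
      "list_encode (map code rs) = lg" "list_encode ys = ly'" "list_all2 (\<lambda>r. eval r (list_decode l)) rs ys"
      using IH0 IH1 by metis
    then show ?thesis using 2 by (intro exI[of _ "rg # rs"] exI[of _ "y # ys"]) auto
  qed
qed

lemma derivation_eval_sound:
  assumes "derivation_set X"
  shows "(\<forall>l y. jdg 0 a l y \<in> X \<longrightarrow> (\<exists>r. code r = a \<and> eval r (list_decode l) y)) \<and>
    (\<forall>l ly. jdg 1 a l ly \<in> X \<longrightarrow> (\<exists>rs ys. list_encode (map code rs) = a \<and> list_encode ys = ly \<and>
       list_all2 (\<lambda>r. eval r (list_decode l)) rs ys))"
proof (induction a rule: less_induct)
  case (less a)
  have IH0: "\<exists>r. code r = a' \<and> eval r (list_decode l) y" if "a' < a" "jdg 0 a' l y \<in> X" for a' l y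
    using less.IH that by blast
  have IH1: "\<exists>rs ys. list_encode (map code rs) = a' \<and> list_encode ys = ly \<and>
      list_all2 (\<lambda>r. eval r (list_decode l)) rs ys" if "a' < a" "jdg 1 a' l ly \<in> X" for a' l ly
    using less.IH that by blast
  show ?case
    using derivation_eval_step[OF assms _ IH0 IH1] derivation_evals_step[OF assms _ IH0 IH1] by blast
qed

lemma eval_rule_mono: "eval_rule X a l y \<Longrightarrow> X \<subseteq> Y \<Longrightarrow> eval_rule Y a l y"
  unfolding eval_rule_def
  apply (erule disj_forward, blast)+
  apply blast
  done

lemma evals_rule_mono: "evals_rule X a l y \<Longrightarrow> X \<subseteq> Y \<Longrightarrow> evals_rule Y a l y"
  unfolding evals_rule_def by blast

lemma arg_rule_mono: "arg_rule X l k v \<Longrightarrow> X \<subseteq> Y \<Longrightarrow> arg_rule Y l k v"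
  unfolding arg_rule_def by blast

lemma code_rule_mono: "code_rule X a \<Longrightarrow> X \<subseteq> Y \<Longrightarrow> code_rule Y a"
  unfolding code_rule_def by blast

lemma codes_rule_mono: "codes_rule X a \<Longrightarrow> X \<subseteq> Y \<Longrightarrow> codes_rule Y a"
  unfolding codes_rule_def by blast

lemma justified_mono: "justified X k a b c \<Longrightarrow> X \<subseteq> Y \<Longrightarrow> justified Y k a b c"
  unfolding justified_def
  by (metis eval_rule_mono evals_rule_mono arg_rule_mono code_rule_mono codes_rule_mono)

lemma derivation_set_Union: "(\<And>X. X \<in> \<X> \<Longrightarrow> derivation_set X) \<Longrightarrow> derivation_set (\<Union>\<X>)"
  unfolding derivation_set_def by (meson Union_iff Union_upper justified_mono)

lemma derivation_set_insert:
  "derivation_set X \<Longrightarrow> justified X k a b c \<Longrightarrow> derivation_set (insert (jdg k a b c) X)"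
  unfolding derivation_set_def by (meson insert_iff justified_mono subset_insertI)

definition derivable :: "nat \<Rightarrow> bool" where
  "derivable q \<longleftrightarrow> (\<exists>T. derivation_set (set_decode T) \<and> q \<in> set_decode T)"

lemma derivable_simultaneously:
  assumes "finite Q" "\<forall>q\<in>Q. derivable q"
  shows "\<exists>T. derivation_set (set_decode T) \<and> Q \<subseteq> set_decode T"
proof -
  obtain T where T: "\<And>q. q \<in> Q \<Longrightarrow> derivation_set (set_decode (T q)) \<and> q \<in> set_decode (T q)"
    using assms(2) unfolding derivable_def by metis
  define X where "X = (\<Union>q\<in>Q. set_decode (T q))"
  have "derivation_set X" "Q \<subseteq> X" "finite X"
    unfolding X_def using T assms(1) by (auto intro: derivation_set_Union)
  then show ?thesis by (metis set_encode_inverse)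
qed

lemma derivable_by_rule:
  assumes "finite Q" "\<forall>q\<in>Q. derivable q" "justified Q k a b c"
  shows "derivable (jdg k a b c)"
proof -
  obtain T where T: "derivation_set (set_decode T)" "Q \<subseteq> set_decode T"
    using derivable_simultaneously[OF assms(1,2)] by blast
  define X where "X = insert (jdg k a b c) (set_decode T)"
  have "derivation_set X" "finite X"
    unfolding X_def using T assms(3) by (auto intro: derivation_set_insert elim: justified_mono)
  then show ?thesis
    unfolding derivable_def X_def by (metis insertI1 set_encode_inverse)
qed

lemma derivable_axiom: "justified {} k a b c \<Longrightarrow> derivable (jdg k a b c)"
  by (rule derivable_by_rule) auto

lemma arg_derivable: "derivable (jdg 2 (list_encode xs) k (arg xs k))"
proof (induction xs arbitrary: k)
  case (Cons x xs)
  show ?case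
  proof (cases k)
    case (Suc k')
    then show ?thesis using Cons.IH[of k']
      by (intro derivable_by_rule[of "{jdg 2 (list_encode xs) k' (arg xs k')}"])
        (auto simp: justified_def arg_rule_def arg_def)
  qed (auto intro: derivable_axiom simp: justified_def arg_rule_def arg_def)
qed (auto intro: derivable_axiom simp: justified_def arg_rule_def arg_def)

lemma codes_derivable:
  "\<forall>g\<in>set gs. derivable (jdg 3 (code g) 0 0) \<Longrightarrow> derivable (jdg 4 (list_encode (map code gs)) 0 0)"
proof (induction gs)
  case (Cons g gs)
  then show ?case
    by (intro derivable_by_rule[of "{jdg 3 (code g) 0 0, jdg 4 (list_encode (map code gs)) 0 0}"])
      (auto simp: justified_def codes_rule_def)
qed (auto intro: derivable_axiom simp: justified_def codes_rule_def)

lemma code_derivable: "derivable (jdg 3 (code r) 0 0)"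
proof (induction r)
  case (Cn f gs)
  then show ?case
    using codes_derivable[of gs]
    by (intro derivable_by_rule[of "{jdg 3 (code f) 0 0, jdg 4 (list_encode (map code gs)) 0 0}"])
      (auto simp: justified_def code_rule_def)
next
  case (Pr f g)
  then show ?case
    by (intro derivable_by_rule[of "{jdg 3 (code f) 0 0, jdg 3 (code g) 0 0}"])
      (auto simp: justified_def code_rule_def)
next
  case (Mn f)
  then show ?case
    by (intro derivable_by_rule[of "{jdg 3 (code f) 0 0}"]) (auto simp: justified_def code_rule_def)
qed (auto intro: derivable_axiom simp: justified_def code_rule_def)

lemma evals_derivable:
  "list_all2 (\<lambda>g y. derivable (jdg 0 (code g) l y)) gs ys \<Longrightarrow>
    derivable (jdg 1 (list_encode (map code gs)) l (list_encode ys))"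
proof (induction gs ys rule: list_all2_induct)
  case (Cons g gs y ys)
  then show ?case
    by (intro derivable_by_rule[of "{jdg 0 (code g) l y, jdg 1 (list_encode (map code gs)) l (list_encode ys)}"])
      (auto simp: justified_def evals_rule_def)
qed (auto intro: derivable_axiom simp: justified_def evals_rule_def)

lemma eval_derivable: "eval r xs y \<Longrightarrow> derivable (jdg 0 (code r) (list_encode xs) y)"
proof (induction rule: eval.induct)
  case (eval_S xs)
  show ?case using arg_derivable[of xs 0]
    by (intro derivable_by_rule[of "{jdg 2 (list_encode xs) 0 (arg xs 0)}"])
      (auto simp: justified_def eval_rule_def)
next
  case (eval_Id k xs)
  show ?case using arg_derivable[of xs k]
    by (intro derivable_by_rule[of "{jdg 2 (list_encode xs) k (arg xs k)}"])
      (auto simp: justified_def eval_rule_def)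
next
  case (eval_Cn ys gs xs f y)
  have "derivable (jdg 1 (list_encode (map code gs)) (list_encode xs) (list_encode ys))"
    using eval_Cn.hyps(1) eval_Cn.IH(1) by (intro evals_derivable) (simp add: list_all2_conv_all_nth)
  then show ?case using eval_Cn.IH(2)
    by (intro derivable_by_rule[of "{jdg 1 (list_encode (map code gs)) (list_encode xs) (list_encode ys),
        jdg 0 (code f) (list_encode ys) y}"])
      (auto simp: justified_def eval_rule_def)
next
  case (eval_Pr0 f xs y g)
  show ?case using eval_Pr0.IH code_derivable[of "Pr f g"]
    by (intro derivable_by_rule[of "{jdg 0 (code f) (list_encode xs) y, jdg 3 (code (Pr f g)) 0 0}"])
      (simp_all add: justified_def eval_rule_def)
next
  case (eval_Pr0_nil f y g)
  show ?case using eval_Pr0_nil.IH code_derivable[of "Pr f g"]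
    by (intro derivable_by_rule[of "{jdg 0 (code f) 0 y, jdg 3 (code (Pr f g)) 0 0}"])
      (simp_all add: justified_def eval_rule_def)
next
  case (eval_PrS f g n xs z y)
  show ?case using eval_PrS.IH
    by (intro derivable_by_rule[of "{jdg 0 (code (Pr f g)) (list_encode (n # xs)) z,
        jdg 0 (code g) (list_encode (n # z # xs)) y}"])
      (auto simp: justified_def eval_rule_def)
next
  case (eval_Mn f n xs)
  obtain v where v: "\<And>m. m < n \<Longrightarrow> v m \<noteq> 0 \<and> derivable (jdg 0 (code f) (list_encode (m # xs)) (v m))"
    using eval_Mn.IH(2) by metis
  show ?case using eval_Mn.IH(1) v
    by (intro derivable_by_rule[of "insert (jdg 0 (code f) (list_encode (n # xs)) 0)
        ((\<lambda>m. jdg 0 (code f) (list_encode (m # xs)) (v m)) ` {..<n})"])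
      (auto simp: justified_def eval_rule_def)
qed (auto intro: derivable_axiom simp: justified_def eval_rule_def)

lemma W_iff_derivable: "x \<in> W i \<longleftrightarrow> (\<exists>y. derivable (jdg 0 i (Suc (pe x 0)) y))"
proof
  assume "x \<in> W i"
  then obtain r where r: "code r = i" unfolding W_def by (auto split: if_splits)
  then obtain y where "eval r [x] y" using \<open>x \<in> W i\<close> W_code[of r] by auto
  then show "\<exists>y. derivable (jdg 0 i (Suc (pe x 0)) y)" using eval_derivable r by fastforce
next
  assume "\<exists>y. derivable (jdg 0 i (Suc (pe x 0)) y)"
  then obtain r y where "code r = i" "eval r (list_decode (Suc (pe x 0))) y"
    using derivation_eval_sound unfolding derivable_def by blast
  then show "x \<in> W i" using W_code by auto
qed

subsection \<open>Derivation sets are definable by bounded formulas\<close>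

definition mem_fm :: "tm \<Rightarrow> tm \<Rightarrow> fm" where
  "mem_fm a b = BEx 398 (Sc b) (BEx 399 (P2 a) (Eq b (Pl (Pl (Ml (V 398) (P2 (Sc a))) (P2 a)) (V 399))))"

lemma mem_set_decode_iff: "n \<in> set_decode d \<longleftrightarrow> (\<exists>q<Suc d. \<exists>r<2^n. d = q * 2^Suc n + 2^n + (r::nat))"
proof
  assume "n \<in> set_decode d"
  then have "odd (d div 2^n)" by (simp add: set_decode_def)
  then obtain q where q: "d div 2^n = 2*q + 1" by (metis oddE)
  have "d = (d div 2^n) * 2^n + d mod 2^n" by (rule div_mult_mod_eq[symmetric])
  also have "\<dots> = q * 2^Suc n + 2^n + d mod 2^n" using q by (simp add: algebra_simps)
  finally have e: "d = q * 2^Suc n + 2^n + d mod 2^n" .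
  have "q \<le> d" using e by (metis le_add1 le_trans mult_le_mono1 one_le_numeral one_le_power mult_1 mult.commute)
  moreover have "d mod 2^n < 2^n" by simp
  ultimately show "\<exists>q<Suc d. \<exists>r<2^n. d = q * 2^Suc n + 2^n + r" using e le_imp_less_Suc by blast
next
  assume "\<exists>q<Suc d. \<exists>r<2^n. d = q * 2^Suc n + 2^n + (r::nat)"
  then obtain q r where "r < 2^n" "d = q * 2^Suc n + 2^n + r" by blast
  then have d: "d = r + (2*q+1) * 2^n" by (simp add: algebra_simps)
  have "d div 2^n = (2*q+1) + r div 2^n" unfolding d by (rule div_mult_self1) simp
  also have "r div 2^n = 0" using \<open>r < 2^n\<close> by simp
  finally have "d div 2^n = 2*q + 1" by simp
  then show "n \<in> set_decode d" by (simp add: set_decode_def)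
qed

lemma holds_mem_fm [simp]: "398 \<notin> tm_vars a \<Longrightarrow> 399 \<notin> tm_vars a \<Longrightarrow> 398 \<notin> tm_vars b \<Longrightarrow> 399 \<notin> tm_vars b \<Longrightarrow>
   holds s (mem_fm a b) \<longleftrightarrow> tval s a \<in> set_decode (tval s b)"
  unfolding mem_fm_def mem_set_decode_iff by (simp add: mult.commute)

definition jdg_tm :: "tm \<Rightarrow> tm \<Rightarrow> tm \<Rightarrow> tm \<Rightarrow> tm" where "jdg_tm k a b c = Pe k (Pe a (Pe b c))"

lemma tval_jdg_tm [simp]: "tval s (jdg_tm k a b c) = jdg (tval s k) (tval s a) (tval s b) (tval s c)"
  by (simp add: jdg_tm_def jdg_def)

lemma tm_vars_jdg_tm [simp]: "tm_vars (jdg_tm k a b c) = tm_vars k \<union> tm_vars a \<union> tm_vars b \<union> tm_vars c"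
  by (auto simp: jdg_tm_def)

lemma set_decode_less: "x \<in> set_decode T \<Longrightarrow> x < T"
proof -
  assume "x \<in> set_decode T"
  then have "odd (T div 2^x)" by (simp add: set_decode_def)
  then have "0 < T div 2^x" by (metis gr0I odd_pos)
  then have "2^x \<le> T" by (metis div_greater_zero_iff)
  moreover have "x < 2^x" by (rule less_exp)
  ultimately show "x < T" by linarith
qed

lemma jdg_mem_less:
  assumes "jdg k a b c \<in> set_decode T" shows "k < T" "a < T" "b < T" "c < T"
proof -
  have "jdg k a b c < T" using set_decode_less assms by blast
  then show "k < T" "a < T" "b < T" "c < T" unfolding jdg_def
    by (meson le_less_trans le_prod_encode_1 le_prod_encode_2)+
qed

lemma prod_encode_less_D: "pe x y < T \<Longrightarrow> x < T \<and> y < T"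
  by (meson le_less_trans le_prod_encode_1 le_prod_encode_2)

lemma Suc_prod_encode_less_D: "Suc (pe x y) < T \<Longrightarrow> x < T \<and> y < T"
  by (meson Suc_lessD le_less_trans le_prod_encode_1 le_prod_encode_2)

text \<open>The following formulas speak about the set coded by variable \<open>t\<close> and the judgement
  \<open>jdg (V 302) (V 303) (V 304) (V 305)\<close>; they use variables from 310 on as witnesses and
  \<open>mem_fm\<close> uses 398 and 399, so \<open>t < 300\<close> keeps all of them apart.\<close>

definition arg_rule_fm :: "nat \<Rightarrow> fm" where
  "arg_rule_fm t = (let T = V t; A = V 303; L = V 304; Y = V 305; M = (\<lambda>x. mem_fm x T) in
   Disj (Conj (Eq A (N 0)) (Eq Y (N 0))) (BEx 310 T (BEx 311 T (Conj (Eq A (Sc (Pe (V 310) (V 311))))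
     (Disj (Conj (Eq L (N 0)) (Eq Y (V 310))) (BEx 312 T (Conj (Eq L (Sc (V 312))) (M (jdg_tm (N 2) (V 311) (V 312) Y)))))))))"

lemma holds_arg_rule_fm:
  assumes "t < 300" "s t = T" "s 303 = a" "s 304 = l" "s 305 = y" "a < T" "l < T" "y < T"
  shows "holds s (arg_rule_fm t) \<longleftrightarrow> arg_rule (set_decode T) a l y"
  using assms unfolding arg_rule_fm_def arg_rule_def Let_def
  by (auto dest: jdg_mem_less prod_encode_less_D Suc_prod_encode_less_D)

definition evals_rule_fm :: "nat \<Rightarrow> fm" where
  "evals_rule_fm t = (let T = V t; A = V 303; L = V 304; Y = V 305; M = (\<lambda>x. mem_fm x T) in
   Disj (Conj (Eq A (N 0)) (Eq Y (N 0))) (BEx 310 T (BEx 311 T (BEx 312 T (BEx 313 T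
     (Conj (Eq A (Sc (Pe (V 310) (V 311)))) (Conj (Eq Y (Sc (Pe (V 312) (V 313))))
       (Conj (M (jdg_tm (N 0) (V 310) L (V 312))) (M (jdg_tm (N 1) (V 311) L (V 313)))))))))))"

lemma holds_evals_rule_fm:
  assumes "t < 300" "s t = T" "s 303 = a" "s 304 = l" "s 305 = y" "a < T" "l < T" "y < T"
  shows "holds s (evals_rule_fm t) \<longleftrightarrow> evals_rule (set_decode T) a l y"
  using assms unfolding evals_rule_fm_def evals_rule_def Let_def
  by (auto dest: jdg_mem_less prod_encode_less_D Suc_prod_encode_less_D)

definition code_rule_fm :: "nat \<Rightarrow> fm" where
  "code_rule_fm t = (let T = V t; A = V 303; M = (\<lambda>x. mem_fm x T) in
   Disj (Eq A (Pe (N 0) (N 0))) (Disj (Eq A (Pe (N 1) (N 0))) (Disj (BEx 310 T (Eq A (Pe (N 2) (V 310))))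
   (Disj (BEx 310 T (BEx 311 T (Conj (Eq A (Pe (N 3) (Pe (V 310) (V 311))))
          (Conj (M (jdg_tm (N 3) (V 310) (N 0) (N 0))) (M (jdg_tm (N 4) (V 311) (N 0) (N 0)))))))
   (Disj (BEx 310 T (BEx 311 T (Conj (Eq A (Pe (N 4) (Pe (V 310) (V 311))))
          (Conj (M (jdg_tm (N 3) (V 310) (N 0) (N 0))) (M (jdg_tm (N 3) (V 311) (N 0) (N 0)))))))
       (BEx 310 T (Conj (Eq A (Pe (N 5) (V 310))) (M (jdg_tm (N 3) (V 310) (N 0) (N 0))))))))))"

lemma holds_code_rule_fm:
  assumes "t < 300" "s t = T" "s 303 = a" "a < T"
  shows "holds s (code_rule_fm t) \<longleftrightarrow> code_rule (set_decode T) a"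
  using assms unfolding code_rule_fm_def code_rule_def Let_def
  by (auto dest: jdg_mem_less prod_encode_less_D Suc_prod_encode_less_D)

definition codes_rule_fm :: "nat \<Rightarrow> fm" where
  "codes_rule_fm t = (let T = V t; A = V 303; M = (\<lambda>x. mem_fm x T) in
   Disj (Eq A (N 0)) (BEx 310 T (BEx 311 T (Conj (Eq A (Sc (Pe (V 310) (V 311))))
          (Conj (M (jdg_tm (N 3) (V 310) (N 0) (N 0))) (M (jdg_tm (N 4) (V 311) (N 0) (N 0))))))))"

lemma holds_codes_rule_fm:
  assumes "t < 300" "s t = T" "s 303 = a" "a < T"
  shows "holds s (codes_rule_fm t) \<longleftrightarrow> codes_rule (set_decode T) a"
  using assms unfolding codes_rule_fm_def codes_rule_def Let_def
  by (auto dest: jdg_mem_less prod_encode_less_D Suc_prod_encode_less_D)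

definition Z_rule_fm :: fm where
  "Z_rule_fm = Conj (Eq (V 303) (Pe (N 0) (N 0))) (Eq (V 305) (N 0))"

definition S_rule_fm :: "nat \<Rightarrow> fm" where
  "S_rule_fm t = Conj (Eq (V 303) (Pe (N 1) (N 0))) (BEx 310 (V t) (Conj (mem_fm (jdg_tm (N 2) (V 304) (N 0) (V 310)) (V t)) (Eq (V 305) (Sc (V 310)))))"

definition Id_rule_fm :: "nat \<Rightarrow> fm" where
  "Id_rule_fm t = BEx 310 (V t) (Conj (Eq (V 303) (Pe (N 2) (V 310))) (mem_fm (jdg_tm (N 2) (V 304) (V 310) (V 305)) (V t)))"

definition Cn_rule_fm :: "nat \<Rightarrow> fm" where
  "Cn_rule_fm t = BEx 310 (V t) (BEx 311 (V t) (Conj (Eq (V 303) (Pe (N 3) (Pe (V 310) (V 311))))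
        (BEx 312 (V t) (Conj (mem_fm (jdg_tm (N 1) (V 311) (V 304) (V 312)) (V t)) (mem_fm (jdg_tm (N 0) (V 310) (V 312) (V 305)) (V t))))))"

definition Pr0_nil_rule_fm :: "nat \<Rightarrow> fm" where
  "Pr0_nil_rule_fm t = Conj (Eq (V 304) (N 0)) (Conj (mem_fm (jdg_tm (N 0) (V 310) (N 0) (V 305)) (V t)) (mem_fm (jdg_tm (N 3) (V 303) (N 0) (N 0)) (V t)))"

definition Pr0_rule_fm :: "nat \<Rightarrow> fm" where
  "Pr0_rule_fm t = BEx 312 (V t) (Conj (Eq (V 304) (Sc (Pe (N 0) (V 312)))) (Conj (mem_fm (jdg_tm (N 0) (V 310) (V 312) (V 305)) (V t)) (mem_fm (jdg_tm (N 3) (V 303) (N 0) (N 0)) (V t))))"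

definition PrS_rule_fm :: "nat \<Rightarrow> fm" where
  "PrS_rule_fm t = BEx 313 (V t) (BEx 312 (V t) (Conj (Eq (V 304) (Sc (Pe (Sc (V 313)) (V 312))))
               (BEx 314 (V t) (Conj (mem_fm (jdg_tm (N 0) (V 303) (Sc (Pe (V 313) (V 312))) (V 314)) (V t))
                              (mem_fm (jdg_tm (N 0) (V 311) (Sc (Pe (V 313) (Sc (Pe (V 314) (V 312))))) (V 305)) (V t))))))"

definition Pr_rule_fm :: "nat \<Rightarrow> fm" where
  "Pr_rule_fm t = BEx 310 (V t) (BEx 311 (V t) (Conj (Eq (V 303) (Pe (N 4) (Pe (V 310) (V 311)))) (Disj (Pr0_nil_rule_fm t) (Disj (Pr0_rule_fm t) (PrS_rule_fm t)))))"

definition Mn_rule_fm :: "nat \<Rightarrow> fm" where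
  "Mn_rule_fm t = BEx 310 (V t) (Conj (Eq (V 303) (Pe (N 5) (V 310))) (Conj (mem_fm (jdg_tm (N 0) (V 310) (Sc (Pe (V 305) (V 304))) (N 0)) (V t))
        (BAll 315 (V 305) (BEx 316 (V t) (Conj (Neg (Eq (V 316) (N 0))) (mem_fm (jdg_tm (N 0) (V 310) (Sc (Pe (V 315) (V 304))) (V 316)) (V t)))))))"

definition eval_rule_fm :: "nat \<Rightarrow> fm" where
  "eval_rule_fm t = Disj Z_rule_fm (Disj (S_rule_fm t) (Disj (Id_rule_fm t) (Disj (Cn_rule_fm t) (Disj (Pr_rule_fm t) (Mn_rule_fm t)))))"

context
  fixes s :: "nat \<Rightarrow> nat" and t T a l y :: nat and X :: "nat set"
  assumes as: "t < 300" "s t = T" "s 303 = a" "s 304 = l" "s 305 = y" "a < T" "l < T" "y < T"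
    and X: "X = set_decode T"
begin

lemma holds_Z_rule_fm: "holds s Z_rule_fm \<longleftrightarrow> (a = pe 0 0 \<and> y = 0)"
  using as unfolding Z_rule_fm_def by auto

lemma holds_S_rule_fm: "holds s (S_rule_fm t) \<longleftrightarrow> (a = pe 1 0 \<and> (\<exists>v. jdg 2 l 0 v \<in> X \<and> y = Suc v))"
  using as X unfolding S_rule_fm_def by (auto dest: jdg_mem_less prod_encode_less_D Suc_prod_encode_less_D)

lemma holds_Id_rule_fm: "holds s (Id_rule_fm t) \<longleftrightarrow> (\<exists>k. a = pe 2 k \<and> jdg 2 l k y \<in> X)"
  using as X unfolding Id_rule_fm_def by (auto dest: jdg_mem_less prod_encode_less_D Suc_prod_encode_less_D)

lemma holds_Cn_rule_fm: "holds s (Cn_rule_fm t) \<longleftrightarrow> (\<exists>xf lg. a = pe 3 (pe xf lg) \<and> (\<exists>ly. jdg 1 lg l ly \<in> X \<and> jdg 0 xf ly y \<in> X))"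
  using as X unfolding Cn_rule_fm_def by (auto dest: jdg_mem_less prod_encode_less_D Suc_prod_encode_less_D)

lemma holds_Pr_rule_fm: "holds s (Pr_rule_fm t) \<longleftrightarrow> (\<exists>xf xg. a = pe 4 (pe xf xg) \<and>
        ((l = 0 \<and> jdg 0 xf 0 y \<in> X \<and> jdg 3 a 0 0 \<in> X)
       \<or> (\<exists>l'. l = Suc (pe 0 l') \<and> jdg 0 xf l' y \<in> X \<and> jdg 3 a 0 0 \<in> X)
       \<or> (\<exists>n l'. l = Suc (pe (Suc n) l') \<and>
            (\<exists>z. jdg 0 a (Suc (pe n l')) z \<in> X \<and> jdg 0 xg (Suc (pe n (Suc (pe z l')))) y \<in> X))))"
proof -
  have A: "holds (s(310 := u, 311 := w)) (Pr0_nil_rule_fm t) \<longleftrightarrow> (l = 0 \<and> jdg 0 u 0 y \<in> X \<and> jdg 3 a 0 0 \<in> X)" for u w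
    using as X unfolding Pr0_nil_rule_fm_def by auto
  have B: "holds (s(310 := u, 311 := w)) (Pr0_rule_fm t) \<longleftrightarrow> (\<exists>l'. l = Suc (pe 0 l') \<and> jdg 0 u l' y \<in> X \<and> jdg 3 a 0 0 \<in> X)" for u w
    using as X unfolding Pr0_rule_fm_def by (auto dest: jdg_mem_less prod_encode_less_D Suc_prod_encode_less_D)
  have C: "holds (s(310 := u, 311 := w)) (PrS_rule_fm t) \<longleftrightarrow> (\<exists>n l'. l = Suc (pe (Suc n) l') \<and>
            (\<exists>z. jdg 0 a (Suc (pe n l')) z \<in> X \<and> jdg 0 w (Suc (pe n (Suc (pe z l')))) y \<in> X))" for u w
  proof -
    have "holds (s(310 := u, 311 := w)) (PrS_rule_fm t) \<longleftrightarrow> (\<exists>n<T. \<exists>l'<T. l = Suc (pe (Suc n) l') \<and>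
            (\<exists>z<T. jdg 0 a (Suc (pe n l')) z \<in> X \<and> jdg 0 w (Suc (pe n (Suc (pe z l')))) y \<in> X))"
      using as X unfolding PrS_rule_fm_def by simp
    also have "\<dots> \<longleftrightarrow> (\<exists>n l'. l = Suc (pe (Suc n) l') \<and>
            (\<exists>z. jdg 0 a (Suc (pe n l')) z \<in> X \<and> jdg 0 w (Suc (pe n (Suc (pe z l')))) y \<in> X))"
    proof
      assume "\<exists>n l'. l = Suc (pe (Suc n) l') \<and>
            (\<exists>z. jdg 0 a (Suc (pe n l')) z \<in> X \<and> jdg 0 w (Suc (pe n (Suc (pe z l')))) y \<in> X)"
      then obtain n l' z where h: "l = Suc (pe (Suc n) l')" "jdg 0 a (Suc (pe n l')) z \<in> X"
        "jdg 0 w (Suc (pe n (Suc (pe z l')))) y \<in> X" by blast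
      have "Suc n < T \<and> l' < T" using Suc_prod_encode_less_D[of "Suc n" l' T] h(1) \<open>l < T\<close> by simp
      then have "n < T" "l' < T" by auto
      moreover have "z < T" using h(2) X jdg_mem_less by blast
      ultimately show "\<exists>n<T. \<exists>l'<T. l = Suc (pe (Suc n) l') \<and>
            (\<exists>z<T. jdg 0 a (Suc (pe n l')) z \<in> X \<and> jdg 0 w (Suc (pe n (Suc (pe z l')))) y \<in> X)"
        using h by blast
    qed blast
    finally show ?thesis .
  qed
  have "holds s (Pr_rule_fm t) \<longleftrightarrow> (\<exists>u<T. \<exists>w<T. a = pe 4 (pe u w) \<and>
      (holds (s(310 := u, 311 := w)) (Pr0_nil_rule_fm t) \<or> holds (s(310 := u, 311 := w)) (Pr0_rule_fm t) \<or> holds (s(310 := u, 311 := w)) (PrS_rule_fm t)))"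
    using as unfolding Pr_rule_fm_def by simp
  also have "\<dots> \<longleftrightarrow> (\<exists>u w. a = pe 4 (pe u w) \<and>
      (holds (s(310 := u, 311 := w)) (Pr0_nil_rule_fm t) \<or> holds (s(310 := u, 311 := w)) (Pr0_rule_fm t) \<or> holds (s(310 := u, 311 := w)) (PrS_rule_fm t)))"
    using as prod_encode_less_D by blast
  finally show ?thesis unfolding A B C .
qed

lemma holds_Mn_rule_fm: "holds s (Mn_rule_fm t) \<longleftrightarrow> (\<exists>xf. a = pe 5 xf \<and> jdg 0 xf (Suc (pe y l)) 0 \<in> X \<and>
        (\<forall>m<y. \<exists>v. v \<noteq> 0 \<and> jdg 0 xf (Suc (pe m l)) v \<in> X))"
proof -
  have "holds s (Mn_rule_fm t) \<longleftrightarrow> (\<exists>xf<T. a = pe 5 xf \<and> jdg 0 xf (Suc (pe y l)) 0 \<in> X \<and>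
        (\<forall>m<y. \<exists>v<T. v \<noteq> 0 \<and> jdg 0 xf (Suc (pe m l)) v \<in> X))"
    using as X unfolding Mn_rule_fm_def by simp
  also have "\<dots> \<longleftrightarrow> (\<exists>xf. a = pe 5 xf \<and> jdg 0 xf (Suc (pe y l)) 0 \<in> X \<and>
        (\<forall>m<y. \<exists>v. v \<noteq> 0 \<and> jdg 0 xf (Suc (pe m l)) v \<in> X))"
  proof
    assume "\<exists>xf. a = pe 5 xf \<and> jdg 0 xf (Suc (pe y l)) 0 \<in> X \<and>
        (\<forall>m<y. \<exists>v. v \<noteq> 0 \<and> jdg 0 xf (Suc (pe m l)) v \<in> X)"
    then obtain xf where h: "a = pe 5 xf" "jdg 0 xf (Suc (pe y l)) 0 \<in> X"
        "\<forall>m<y. \<exists>v. v \<noteq> 0 \<and> jdg 0 xf (Suc (pe m l)) v \<in> X" by blast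
    have "xf < T" using prod_encode_less_D[of 5 xf T] h(1) as by simp
    moreover have "\<forall>m<y. \<exists>v<T. v \<noteq> 0 \<and> jdg 0 xf (Suc (pe m l)) v \<in> X"
      using h(3) X jdg_mem_less(4) by blast
    ultimately show "\<exists>xf<T. a = pe 5 xf \<and> jdg 0 xf (Suc (pe y l)) 0 \<in> X \<and>
        (\<forall>m<y. \<exists>v<T. v \<noteq> 0 \<and> jdg 0 xf (Suc (pe m l)) v \<in> X)" using h by blast
  qed blast
  finally show ?thesis .
qed

lemma holds_eval_rule_fm: "holds s (eval_rule_fm t) \<longleftrightarrow> eval_rule X a l y"
  unfolding eval_rule_fm_def eval_rule_def holds.simps holds_Z_rule_fm holds_S_rule_fm holds_Id_rule_fm holds_Cn_rule_fm holds_Pr_rule_fm holds_Mn_rule_fm ..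

end

definition justified_fm :: "nat \<Rightarrow> fm" where
  "justified_fm t = Disj (Conj (Eq (V 302) (N 0)) (eval_rule_fm t)) (Disj (Conj (Eq (V 302) (N 1)) (evals_rule_fm t)) (Disj (Conj (Eq (V 302) (N 2)) (arg_rule_fm t))
   (Disj (Conj (Eq (V 302) (N 3)) (Conj (Eq (V 304) (N 0)) (Conj (Eq (V 305) (N 0)) (code_rule_fm t))))
       (Conj (Eq (V 302) (N 4)) (Conj (Eq (V 304) (N 0)) (Conj (Eq (V 305) (N 0)) (codes_rule_fm t)))))))"

lemma holds_justified_fm:
  assumes "t < 300" "s t = T" "s 302 = k" "s 303 = a" "s 304 = l" "s 305 = y" "a < T" "l < T" "y < T"
  shows "holds s (justified_fm t) \<longleftrightarrow> justified (set_decode T) k a l y"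
  using assms holds_eval_rule_fm[OF assms(1,2,4-9) refl] holds_evals_rule_fm[OF assms(1,2,4-9)] holds_arg_rule_fm[OF assms(1,2,4-9)]
     holds_code_rule_fm[OF assms(1,2,4,7)] holds_codes_rule_fm[OF assms(1,2,4,7)]
  unfolding justified_fm_def justified_def by auto

definition derivation_set_fm :: "nat \<Rightarrow> fm" where
  "derivation_set_fm t = BAll 301 (V t) (Imp (mem_fm (V 301) (V t)) (BEx 302 (V t) (BEx 303 (V t) (BEx 304 (V t) (BEx 305 (V t)
   (Conj (Eq (V 301) (jdg_tm (V 302) (V 303) (V 304) (V 305))) (justified_fm t)))))))"

lemma holds_derivation_set_fm:
  assumes "t < 300"
  shows "holds s (derivation_set_fm t) \<longleftrightarrow> derivation_set (set_decode (s t))"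
proof -
  let ?T = "s t" let ?X = "set_decode (s t)"
  have "holds s (derivation_set_fm t) \<longleftrightarrow> (\<forall>q<?T. q \<in> ?X \<longrightarrow> (\<exists>k<?T. \<exists>a<?T. \<exists>b<?T. \<exists>c<?T. q = jdg k a b c \<and>
      holds (s(301 := q, 302 := k, 303 := a, 304 := b, 305 := c)) (justified_fm t)))"
    using assms unfolding derivation_set_fm_def by simp
  also have "\<dots> \<longleftrightarrow> (\<forall>q<?T. q \<in> ?X \<longrightarrow> (\<exists>k<?T. \<exists>a<?T. \<exists>b<?T. \<exists>c<?T. q = jdg k a b c \<and> justified ?X k a b c))"
  proof -
    have "holds (s(301 := q, 302 := k, 303 := a, 304 := b, 305 := c)) (justified_fm t) \<longleftrightarrow> justified ?X k a b c"
      if "a < ?T" "b < ?T" "c < ?T" for q k a b c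
      using holds_justified_fm[of t "s(301 := q, 302 := k, 303 := a, 304 := b, 305 := c)" ?T k a b c] that assms by simp
    then show ?thesis by (meson less_trans)
  qed
  also have "\<dots> \<longleftrightarrow> derivation_set ?X"
    unfolding derivation_set_def using set_decode_less jdg_mem_less by metis
  finally show ?thesis .
qed

section \<open>Enumeration operators given by \<open>\<Sigma>\<^sub>1\<close> graphs\<close>

definition enum_op :: "nat set \<Rightarrow> nat set \<Rightarrow> nat set" where
  "enum_op G Y = {n. \<exists>d. pe n d \<in> G \<and> set_decode d \<subseteq> Y}"

lemma Gamma_eq_enum_op: "Gamma i = enum_op (W i)"
  by (simp add: fun_eq_iff Gamma_def enum_op_def pair_def)

lemma sigma1_enum_op:
  assumes "\<And>x. x \<in> G \<longleftrightarrow> (\<exists>w. holds (assign2 x w) p)"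
  shows "\<exists>i. Gamma i = enum_op G"
  using sigma1_W_code[OF assms] Gamma_eq_enum_op by metis

text \<open>\<open>tagged A c\<close> is the join \<open>A \<oplus> {c}\<close>.\<close>

definition tagged :: "nat set \<Rightarrow> nat \<Rightarrow> nat set" where
  "tagged A c = (\<lambda>y. 2 * y) ` A \<union> {2 * c + 1}"

definition singleton_code :: "nat \<Rightarrow> nat" where
  "singleton_code m = 2 ^ m"

lemma set_decode_singleton_code [simp]: "set_decode (singleton_code m) = {m}"
  using set_decode_plus_power_2[of m 0] by (simp add: singleton_code_def)

lemma singleton_code_inject [simp]: "singleton_code a = singleton_code b \<longleftrightarrow> a = b"
  by (simp add: singleton_code_def)

lemma double_neq_Suc_double [simp]: "2 * a \<noteq> Suc (2 * b)" "Suc (2 * b) \<noteq> 2 * a"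
  by presburger+

lemma less_Suc_prod_encode: "m \<le> a \<Longrightarrow> m < Suc (pe a b)"
  using le_prod_encode_1[of a b] by linarith

definition tag_graph :: "nat \<Rightarrow> nat set" where
  "tag_graph c = {pe (2 * m) (singleton_code m) | m. True} \<union> {pe (2 * c + 1) 0}"

definition tag_fm :: "nat \<Rightarrow> fm" where
  "tag_fm c = Disj (BEx 2 (Sc (V 0)) (Eq (V 0) (Pe (Ml (N 2) (V 2)) (P2 (V 2)))))
     (Eq (V 0) (Pe (Sc (Ml (N 2) (N c))) (N 0)))"

lemma tag_graph_sigma1: "x \<in> tag_graph c \<longleftrightarrow> (\<exists>w. holds (assign2 x w) (tag_fm c))"
  unfolding tag_graph_def tag_fm_def
  by (auto simp: assign2_def singleton_code_def intro!: less_Suc_prod_encode)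

lemma enum_op_tag_graph: "enum_op (tag_graph c) A = tagged A c"
  unfolding tagged_def by (auto simp: enum_op_def tag_graph_def)

definition untag_graph :: "nat set" where
  "untag_graph = {pe m (singleton_code (2 * m)) | m. True}"

definition untag_fm :: fm where
  "untag_fm = BEx 2 (Sc (V 0)) (Eq (V 0) (Pe (V 2) (P2 (Ml (N 2) (V 2)))))"

lemma untag_graph_sigma1: "x \<in> untag_graph \<longleftrightarrow> (\<exists>w. holds (assign2 x w) untag_fm)"
  unfolding untag_graph_def untag_fm_def
  by (auto simp: assign2_def singleton_code_def intro!: less_Suc_prod_encode)

lemma enum_op_untag_graph: "enum_op untag_graph (tagged A c) = A"
  unfolding tagged_def by (auto simp: enum_op_def untag_graph_def)

definition tag_succ_graph :: "nat set" where
  "tag_succ_graph = {pe (2 * m) (singleton_code (2 * m)) | m. True}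
     \<union> {pe (2 * c + 3) (singleton_code (2 * c + 1)) | c. True}"

definition tag_succ_fm :: fm where
  "tag_succ_fm = Disj (BEx 2 (Sc (V 0)) (Eq (V 0) (Pe (Ml (N 2) (V 2)) (P2 (Ml (N 2) (V 2))))))
     (BEx 2 (Sc (V 0)) (Eq (V 0) (Pe (Sc (Sc (Sc (Ml (N 2) (V 2))))) (P2 (Sc (Ml (N 2) (V 2)))))))"

lemma tag_succ_graph_sigma1: "x \<in> tag_succ_graph \<longleftrightarrow> (\<exists>w. holds (assign2 x w) tag_succ_fm)"
  unfolding tag_succ_graph_def tag_succ_fm_def
  by (auto simp: assign2_def singleton_code_def intro!: less_Suc_prod_encode)

lemma enum_op_tag_succ_graph: "enum_op tag_succ_graph (tagged A c) = tagged A (Suc c)"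
  unfolding tagged_def by (auto simp: enum_op_def tag_succ_graph_def)

definition tag_pred_graph :: "nat set" where
  "tag_pred_graph = {pe (2 * m) (singleton_code (2 * m)) | m. True}
     \<union> {pe (2 * c + 1) (singleton_code (2 * c + 3)) | c. True}"

definition tag_pred_fm :: fm where
  "tag_pred_fm = Disj (BEx 2 (Sc (V 0)) (Eq (V 0) (Pe (Ml (N 2) (V 2)) (P2 (Ml (N 2) (V 2))))))
     (BEx 2 (Sc (V 0)) (Eq (V 0) (Pe (Sc (Ml (N 2) (V 2))) (P2 (Sc (Sc (Sc (Ml (N 2) (V 2)))))))))"

lemma tag_pred_graph_sigma1: "x \<in> tag_pred_graph \<longleftrightarrow> (\<exists>w. holds (assign2 x w) tag_pred_fm)"
  unfolding tag_pred_graph_def tag_pred_fm_def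
  by (auto simp: assign2_def singleton_code_def power_add intro!: less_Suc_prod_encode)

lemma enum_op_tag_pred_graph: "enum_op tag_pred_graph (tagged A (Suc c)) = tagged A c"
  unfolding tagged_def by (auto simp: enum_op_def tag_pred_graph_def) presburger+

definition tag_apply_graph :: "nat set" where
  "tag_apply_graph =
     {pe (2 * n) d | n d i j e. pe n e \<in> W i \<and> set_decode d = (\<lambda>z. 2 * z) ` set_decode e \<union> {2 * pe i j + 1}}
     \<union> {pe (2 * pe j i + 1) (singleton_code (2 * pe i j + 1)) | i j. True}"

lemma double_image_tag_subset_tagged:
  "(\<lambda>z. 2 * z) ` E \<union> {2 * c' + 1} \<subseteq> tagged A c \<longleftrightarrow> E \<subseteq> A \<and> c' = c"
  unfolding tagged_def by auto

lemma enum_op_tag_apply_graph: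
  "enum_op tag_apply_graph (tagged A (pe i j)) = tagged (Gamma i A) (pe j i)"
proof (intro set_eqI iffI)
  fix m
  assume "m \<in> enum_op tag_apply_graph (tagged A (pe i j))"
  then obtain d where d: "pe m d \<in> tag_apply_graph" "set_decode d \<subseteq> tagged A (pe i j)"
    unfolding enum_op_def by blast
  from d(1) consider n i' j' e where "m = 2 * n" "pe n e \<in> W i'"
      "set_decode d = (\<lambda>z. 2 * z) ` set_decode e \<union> {2 * pe i' j' + 1}"
    | i' j' where "m = 2 * pe j' i' + 1" "d = singleton_code (2 * pe i' j' + 1)"
    unfolding tag_apply_graph_def by auto
  then show "m \<in> tagged (Gamma i A) (pe j i)"
  proof cases
    case (1 n i' j' e)
    then have "set_decode e \<subseteq> A" "i' = i" "j' = j"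
      using d(2) double_image_tag_subset_tagged by auto
    then show ?thesis using 1 unfolding tagged_def Gamma_eq_enum_op enum_op_def by auto
  next
    case (2 i' j')
    then have "i' = i" "j' = j" using d(2) double_image_tag_subset_tagged[of "{}"] by auto
    then show ?thesis using 2 unfolding tagged_def by auto
  qed
next
  fix m
  assume "m \<in> tagged (Gamma i A) (pe j i)"
  then consider n e where "m = 2 * n" "pe n e \<in> W i" "set_decode e \<subseteq> A" | "m = 2 * pe j i + 1"
    unfolding tagged_def Gamma_eq_enum_op enum_op_def by auto
  then show "m \<in> enum_op tag_apply_graph (tagged A (pe i j))"
  proof cases
    case (1 n e)
    let ?D = "(\<lambda>z. 2 * z) ` set_decode e \<union> {2 * pe i j + 1}"
    have "pe m (set_encode ?D) \<in> tag_apply_graph" "set_decode (set_encode ?D) \<subseteq> tagged A (pe i j)"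
      using 1 double_image_tag_subset_tagged unfolding tag_apply_graph_def by auto
    then show ?thesis unfolding enum_op_def by blast
  next
    case 2
    have "pe m (singleton_code (2 * pe i j + 1)) \<in> tag_apply_graph"
      using 2 unfolding tag_apply_graph_def by auto
    then show ?thesis unfolding enum_op_def tagged_def by auto
  qed
qed

definition double_tag_mem_fm :: fm where
  "double_tag_mem_fm = Disj (Eq (V 11) (Sc (Ml (N 2) (Pe (V 5) (V 6)))))
     (BEx 12 (Sc (V 11)) (Conj (Eq (V 11) (Ml (N 2) (V 12))) (mem_fm (V 12) (V 7))))"

definition double_tag_eq_fm :: fm where
  "double_tag_eq_fm = BAll 11 (Sc (Sc (Pl (V 3) (Pl (Ml (N 2) (V 7)) (Ml (N 2) (Pe (V 5) (V 6)))))))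
     (Conj (Imp (mem_fm (V 11) (V 3)) double_tag_mem_fm) (Imp double_tag_mem_fm (mem_fm (V 11) (V 3))))"

lemma holds_double_tag_eq_fm:
  "holds s double_tag_eq_fm \<longleftrightarrow>
    set_decode (s 3) = (\<lambda>z. 2 * z) ` set_decode (s 7) \<union> {2 * pe (s 5) (s 6) + 1}"
proof -
  let ?B = "Suc (Suc (s 3 + (2 * s 7 + 2 * pe (s 5) (s 6))))"
  let ?R = "(\<lambda>z. 2 * z) ` set_decode (s 7) \<union> {2 * pe (s 5) (s 6) + 1}"
  have "holds s double_tag_eq_fm \<longleftrightarrow> (\<forall>z < ?B. z \<in> set_decode (s 3) \<longleftrightarrow> z \<in> ?R)"
    unfolding double_tag_eq_fm_def double_tag_mem_fm_def by auto
  also have "\<dots> \<longleftrightarrow> set_decode (s 3) = ?R"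
  proof
    assume "\<forall>z < ?B. z \<in> set_decode (s 3) \<longleftrightarrow> z \<in> ?R"
    moreover have "z < ?B" if "z \<in> set_decode (s 3) \<or> z \<in> ?R" for z
      using that set_decode_less[of z "s 3"] set_decode_less[of "z div 2" "s 7"] by auto
    ultimately show "set_decode (s 3) = ?R" by blast
  qed blast
  finally show ?thesis .
qed

text \<open>Variable 1 holds the witness bound, variable 2 the output and variable 3 the code of the
  finite set of inputs; the derivation witnessing \<open>pe n e \<in> W i\<close> is held in variable 8.\<close>

definition tag_apply_even_fm :: fm where
  "tag_apply_even_fm = BEx 4 (V 1) (BEx 5 (V 1) (BEx 6 (V 1) (BEx 7 (V 1)
     (Conj (Eq (V 2) (Ml (N 2) (V 4))) (Conj double_tag_eq_fm
       (BEx 8 (V 1) (BEx 9 (V 1) (Conj (derivation_set_fm 8)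
         (mem_fm (jdg_tm (N 0) (V 5) (Sc (Pe (Pe (V 4) (V 7)) (N 0))) (V 9)) (V 8))))))))))"

definition tag_apply_odd_fm :: fm where
  "tag_apply_odd_fm = BEx 4 (Sc (V 0)) (BEx 5 (Sc (V 0))
     (Conj (Eq (V 2) (Sc (Ml (N 2) (Pe (V 5) (V 4))))) (Eq (V 3) (P2 (Sc (Ml (N 2) (Pe (V 4) (V 5))))))))"

definition tag_apply_fm :: fm where
  "tag_apply_fm = BEx 2 (Sc (V 0)) (BEx 3 (Sc (V 0))
     (Conj (Eq (V 0) (Pe (V 2) (V 3))) (Disj tag_apply_even_fm tag_apply_odd_fm)))"

lemma holds_tag_apply_even_fm:
  "holds s tag_apply_even_fm \<longleftrightarrow> (\<exists>n<s 1. \<exists>i<s 1. \<exists>j<s 1. \<exists>e<s 1. s 2 = 2 * n \<and>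
    set_decode (s 3) = (\<lambda>z. 2 * z) ` set_decode e \<union> {2 * pe i j + 1} \<and>
    (\<exists>T<s 1. \<exists>y<s 1. derivation_set (set_decode T) \<and> jdg 0 i (Suc (pe (pe n e) 0)) y \<in> set_decode T))"
  unfolding tag_apply_even_fm_def by (simp add: holds_double_tag_eq_fm holds_derivation_set_fm)

lemma holds_tag_apply_odd_fm:
  "holds s tag_apply_odd_fm \<longleftrightarrow>
    (\<exists>i<Suc (s 0). \<exists>j<Suc (s 0). s 2 = 2 * pe j i + 1 \<and> s 3 = singleton_code (2 * pe i j + 1))"
  unfolding tag_apply_odd_fm_def by (auto simp: singleton_code_def)

lemma holds_tag_apply_fm:
  "holds s tag_apply_fm \<longleftrightarrow> (\<exists>m<Suc (s 0). \<exists>d<Suc (s 0). s 0 = pe m d \<and>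
    (holds (s(2 := m, 3 := d)) tag_apply_even_fm \<or> holds (s(2 := m, 3 := d)) tag_apply_odd_fm))"
  by (simp add: tag_apply_fm_def)

lemma tag_apply_graph_sigma1: "x \<in> tag_apply_graph \<longleftrightarrow> (\<exists>w. holds (assign2 x w) tag_apply_fm)"
proof
  assume "\<exists>w. holds (assign2 x w) tag_apply_fm"
  then obtain w m d where md: "x = pe m d"
    "holds ((assign2 x w)(2 := m, 3 := d)) tag_apply_even_fm \<or>
     holds ((assign2 x w)(2 := m, 3 := d)) tag_apply_odd_fm"
    unfolding holds_tag_apply_fm by auto
  then show "x \<in> tag_apply_graph"
    unfolding holds_tag_apply_even_fm holds_tag_apply_odd_fm tag_apply_graph_def
      W_iff_derivable derivable_def
    by auto blast
next
  assume "x \<in> tag_apply_graph"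
  then consider n d i j e where "x = pe (2 * n) d" "pe n e \<in> W i"
      "set_decode d = (\<lambda>z. 2 * z) ` set_decode e \<union> {2 * pe i j + 1}"
    | i j where "x = pe (2 * pe j i + 1) (singleton_code (2 * pe i j + 1))"
    unfolding tag_apply_graph_def by blast
  then show "\<exists>w. holds (assign2 x w) tag_apply_fm"
  proof cases
    case (1 n d i j e)
    obtain T y where T: "derivation_set (set_decode T)" "jdg 0 i (Suc (pe (pe n e) 0)) y \<in> set_decode T"
      using 1(2) unfolding W_iff_derivable derivable_def by blast
    let ?w = "Suc (n + i + j + e + T + y)"
    have "holds ((assign2 x ?w)(2 := 2 * n, 3 := d)) tag_apply_even_fm"
      unfolding holds_tag_apply_even_fm using 1(3) T
      by simp (intro exI conjI; (rule refl)?; (simp; fail)?; linarith?)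
    moreover have "2 * n < Suc x" "d < Suc x"
      using 1(1) le_prod_encode_1[of "2 * n" d] le_prod_encode_2[of d "2 * n"] by simp_all
    ultimately have "holds (assign2 x ?w) tag_apply_fm" unfolding holds_tag_apply_fm using 1(1) by auto
    then show ?thesis by blast
  next
    case (2 i j)
    let ?m = "2 * pe j i + 1" and ?d = "singleton_code (2 * pe i j + 1)"
    have "?m < Suc x" "?d < Suc x"
      using 2 le_prod_encode_1[of ?m ?d] le_prod_encode_2[of ?d ?m] by linarith+
    moreover have "i < Suc x" "j < Suc x"
      using \<open>?m < Suc x\<close> le_prod_encode_1[of j i] le_prod_encode_2[of i j] by linarith+
    ultimately have "holds (assign2 x 0) tag_apply_fm"
      unfolding holds_tag_apply_fm holds_tag_apply_odd_fm using 2 by fastforce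
    then show ?thesis by blast
  qed
qed

section \<open>Iterating enumeration operators\<close>

primrec Gamma_iter :: "(nat \<Rightarrow> nat) \<Rightarrow> nat \<Rightarrow> nat set \<Rightarrow> nat set" where
  "Gamma_iter ks 0 Y = Y"
| "Gamma_iter ks (Suc n) Y = Gamma (ks n) (Gamma_iter ks n Y)"

lemma Gamma_iff: "n \<in> Gamma i A \<longleftrightarrow> (\<exists>d. pe n d \<in> W i \<and> set_decode d \<subseteq> A)"
  by (simp add: Gamma_def pair_def)

lemma Gamma_mono: "Y \<subseteq> Y' \<Longrightarrow> Gamma i Y \<subseteq> Gamma i Y'"
  unfolding Gamma_def by blast

lemma Gamma_iter_mono: "Y \<subseteq> Y' \<Longrightarrow> Gamma_iter ks n Y \<subseteq> Gamma_iter ks n Y'"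
  by (induction n) (auto dest: Gamma_mono[of _ _ "ks _"])

lemma Gamma_iter_compact:
  "x \<in> Gamma_iter ks n Y \<Longrightarrow> \<exists>d. set_decode d \<subseteq> Y \<and> x \<in> Gamma_iter ks n (set_decode d)"
proof (induction n arbitrary: x)
  case 0
  then show ?case by (intro exI[of _ "singleton_code x"]) simp
next
  case (Suc n)
  then obtain e where e: "pe x e \<in> W (ks n)" "set_decode e \<subseteq> Gamma_iter ks n Y"
    unfolding Gamma_iter.simps Gamma_iff by blast
  then have "\<forall>z\<in>set_decode e. \<exists>d. set_decode d \<subseteq> Y \<and> z \<in> Gamma_iter ks n (set_decode d)"
    using Suc.IH by blast
  then obtain dz where dz: "\<And>z. z \<in> set_decode e \<Longrightarrow>
      set_decode (dz z) \<subseteq> Y \<and> z \<in> Gamma_iter ks n (set_decode (dz z))"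
    by metis
  define D where "D = (\<Union>z\<in>set_decode e. set_decode (dz z))"
  have "set_decode e \<subseteq> Gamma_iter ks n D"
    using dz Gamma_iter_mono[of "set_decode (dz _)" D] unfolding D_def by blast
  then have "x \<in> Gamma_iter ks (Suc n) D" using e(1) unfolding Gamma_iter.simps Gamma_iff by blast
  moreover have "D \<subseteq> Y" "set_decode (set_encode D) = D"
    using dz unfolding D_def by auto
  ultimately show ?case by metis
qed

lemma enum_op_Gamma_iter_graph:
  "enum_op {pe n d | n d. n \<in> Gamma_iter ks L (set_decode d)} Y = Gamma_iter ks L Y"
proof (intro set_eqI iffI)
  fix n assume "n \<in> enum_op {pe n d | n d. n \<in> Gamma_iter ks L (set_decode d)} Y"
  then obtain d where "n \<in> Gamma_iter ks L (set_decode d)" "set_decode d \<subseteq> Y"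
    unfolding enum_op_def by auto
  then show "n \<in> Gamma_iter ks L Y" using Gamma_iter_mono by blast
next
  fix n assume "n \<in> Gamma_iter ks L Y"
  then show "n \<in> enum_op {pe n d | n d. n \<in> Gamma_iter ks L (set_decode d)} Y"
    unfolding enum_op_def by (blast dest: Gamma_iter_compact)
qed

text \<open>Membership in an iterate is witnessed by a finite set of stage-tagged elements
  \<open>pe t x\<close>, each obtained from earlier ones by one application of the operator of its stage;
  \<open>E i x e\<close> certifies that \<open>pe x e\<close> lies in the graph \<open>W i\<close> of that operator.\<close>

definition stage_supported ::
    "(nat \<Rightarrow> nat \<Rightarrow> nat \<Rightarrow> bool) \<Rightarrow> (nat \<Rightarrow> nat) \<Rightarrow> nat \<Rightarrow> nat set \<Rightarrow> nat \<Rightarrow> bool" where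
  "stage_supported E ks d Q p \<longleftrightarrow> (\<exists>x. p = pe 0 x \<and> x \<in> set_decode d) \<or>
     (\<exists>t x e. p = pe (Suc t) x \<and> (\<forall>z\<in>set_decode e. pe t z \<in> Q) \<and> E (ks t) x e)"

lemma stage_supported_mono:
  "stage_supported E ks d Q p \<Longrightarrow> Q \<subseteq> Q' \<Longrightarrow> (\<And>i x e. E i x e \<Longrightarrow> E' i x e) \<Longrightarrow>
    stage_supported E' ks d Q' p"
  unfolding stage_supported_def by blast

lemma Gamma_iter_if_stage_supported:
  assumes "\<forall>p\<in>Q. stage_supported (\<lambda>i x e. pe x e \<in> W i) ks d Q p" "pe t x \<in> Q"
  shows "x \<in> Gamma_iter ks t (set_decode d)"
  using assms(2)
proof (induction t arbitrary: x)
  case 0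
  then show ?case using assms(1) unfolding stage_supported_def by fastforce
next
  case (Suc t)
  then obtain e where "\<forall>z\<in>set_decode e. pe t z \<in> Q" "pe x e \<in> W (ks t)"
    using assms(1) unfolding stage_supported_def by fastforce
  then show ?case using Suc.IH unfolding Gamma_iter.simps Gamma_iff by blast
qed

lemma stage_supported_if_Gamma_iter:
  "x \<in> Gamma_iter ks t (set_decode d) \<Longrightarrow>
    \<exists>Q. finite Q \<and> (\<forall>p\<in>Q. stage_supported (\<lambda>i x e. pe x e \<in> W i) ks d Q p) \<and> pe t x \<in> Q"
proof (induction t arbitrary: x)
  case 0
  then show ?case unfolding stage_supported_def by (intro exI[of _ "{pe 0 x}"]) auto
next
  case (Suc t)
  let ?E = "\<lambda>i x e. pe x e \<in> W i"
  obtain e where e: "pe x e \<in> W (ks t)" "set_decode e \<subseteq> Gamma_iter ks t (set_decode d)"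
    using Suc.prems unfolding Gamma_iter.simps Gamma_iff by blast
  then have "\<forall>z\<in>set_decode e. \<exists>Q. finite Q \<and> (\<forall>p\<in>Q. stage_supported ?E ks d Q p) \<and> pe t z \<in> Q"
    using Suc.IH by blast
  then obtain QF where QF: "\<And>z. z \<in> set_decode e \<Longrightarrow>
      finite (QF z) \<and> (\<forall>p\<in>QF z. stage_supported ?E ks d (QF z) p) \<and> pe t z \<in> QF z"
    by metis
  define Q where "Q = insert (pe (Suc t) x) (\<Union>z\<in>set_decode e. QF z)"
  have "stage_supported ?E ks d Q (pe (Suc t) x)"
    using QF e(1) unfolding stage_supported_def Q_def by blast
  moreover have "stage_supported ?E ks d Q p" if "z \<in> set_decode e" "p \<in> QF z" for z p
  proof (rule stage_supported_mono)
    show "stage_supported ?E ks d (QF z) p" using QF that by blast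
    show "QF z \<subseteq> Q" using that unfolding Q_def by blast
  qed
  ultimately have "\<forall>p\<in>Q. stage_supported ?E ks d Q p" unfolding Q_def by blast
  moreover have "finite Q" using QF unfolding Q_def by auto
  ultimately show ?case unfolding Q_def by blast
qed

section \<open>Chains of operators along a computable schedule\<close>

text \<open>The indices met along the chain
  \<open>A \<mapsto> A \<oplus> {0} \<mapsto> \<dots> \<mapsto> A \<oplus> {c} \<mapsto> B \<oplus> {c'} \<mapsto> \<dots> \<mapsto> B \<oplus> {0} \<mapsto> B\<close>,
  which has \<open>c + c' + 3\<close> steps.\<close>

definition chain_schedule :: "nat \<Rightarrow> nat \<Rightarrow> nat \<Rightarrow> nat \<Rightarrow> nat \<Rightarrow> nat \<Rightarrow> nat \<Rightarrow> nat \<Rightarrow> nat" where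
  "chain_schedule a0 a1 a2 b1 b0 c c' t =
    (if t = 0 then a0 else if t \<le> c then a1 else if t = Suc c then a2
     else if t \<le> c + c' + 1 then b1 else b0)"

definition chain_graph :: "nat \<Rightarrow> nat \<Rightarrow> nat \<Rightarrow> nat \<Rightarrow> nat \<Rightarrow> nat set" where
  "chain_graph a0 a1 a2 b1 b0 = {pe c (pe c' (pe n d)) | c c' n d.
     n \<in> Gamma_iter (chain_schedule a0 a1 a2 b1 b0 c c') (c + c' + 3) (set_decode d)}"

lemma stage_supported_derivation:
  assumes "finite Q" "\<forall>p\<in>Q. stage_supported (\<lambda>i x e. pe x e \<in> W i) ks d Q p"
  shows "\<exists>T. derivation_set (set_decode T) \<and>
    (\<forall>p\<in>Q. stage_supported (\<lambda>i x e. \<exists>y. jdg 0 i (Suc (pe (pe x e) 0)) y \<in> set_decode T) ks d Q p)"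
proof -
  have "\<forall>p\<in>Q. \<exists>q. derivable q \<and>
      stage_supported (\<lambda>i x e. \<exists>y. jdg 0 i (Suc (pe (pe x e) 0)) y \<in> {q}) ks d Q p"
  proof
    fix p assume "p \<in> Q"
    with assms(2) consider x where "p = pe 0 x" "x \<in> set_decode d"
      | t x e where "p = pe (Suc t) x" "\<forall>z\<in>set_decode e. pe t z \<in> Q" "pe x e \<in> W (ks t)"
      unfolding stage_supported_def by blast
    then show "\<exists>q. derivable q \<and>
        stage_supported (\<lambda>i x e. \<exists>y. jdg 0 i (Suc (pe (pe x e) 0)) y \<in> {q}) ks d Q p"
    proof cases
      case 1
      then show ?thesis using code_derivable unfolding stage_supported_def by blast
    next
      case (2 t x e)
      then obtain y where "derivable (jdg 0 (ks t) (Suc (pe (pe x e) 0)) y)"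
        using W_iff_derivable by blast
      then show ?thesis using 2 unfolding stage_supported_def by blast
    qed
  qed
  from bchoice[OF this] obtain q where q: "\<forall>p\<in>Q. derivable (q p) \<and>
      stage_supported (\<lambda>i x e. \<exists>y. jdg 0 i (Suc (pe (pe x e) 0)) y \<in> {q p}) ks d Q p"
    by blast
  obtain T where T: "derivation_set (set_decode T)" "q ` Q \<subseteq> set_decode T"
    using derivable_simultaneously[of "q ` Q"] assms(1) q by auto
  have "stage_supported (\<lambda>i x e. \<exists>y. jdg 0 i (Suc (pe (pe x e) 0)) y \<in> set_decode T) ks d Q p"
    if "p \<in> Q" for p
  proof (rule stage_supported_mono)
    show "stage_supported (\<lambda>i x e. \<exists>y. jdg 0 i (Suc (pe (pe x e) 0)) y \<in> {q p}) ks d Q p"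
      using q that by blast
    show "\<exists>y. jdg 0 i (Suc (pe (pe x e) 0)) y \<in> set_decode T"
      if "\<exists>y. jdg 0 i (Suc (pe (pe x e) 0)) y \<in> {q p}" for i x e
      using that T(2) \<open>p \<in> Q\<close> by blast
  qed simp
  then show ?thesis using T(1) by blast
qed

definition derived_within :: "nat \<Rightarrow> nat \<Rightarrow> nat \<Rightarrow> nat \<Rightarrow> nat \<Rightarrow> bool" where
  "derived_within w T i x e \<longleftrightarrow> e < w \<and> (\<exists>y<w. jdg 0 i (Suc (pe (pe x e) 0)) y \<in> set_decode T)"

lemma derived_within_mono: "derived_within w T i x e \<Longrightarrow> w \<le> w' \<Longrightarrow> derived_within w' T i x e"
  unfolding derived_within_def by (meson less_le_trans)

lemma stage_supported_derived_within:
  "stage_supported (\<lambda>i x e. \<exists>y. jdg 0 i (Suc (pe (pe x e) 0)) y \<in> set_decode T) ks d Q p \<Longrightarrow>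
    \<exists>w. stage_supported (derived_within w T) ks d Q p"
  unfolding stage_supported_def derived_within_def by (metis add.commute less_add_Suc1 less_add_Suc2)

lemma ball_less_set_decode: "(\<forall>z<e. z \<in> set_decode e \<longrightarrow> P z) \<longleftrightarrow> (\<forall>z\<in>set_decode e. P z)"
  using set_decode_less by blast

definition stage_jdg_fm :: "nat \<Rightarrow> fm" where
  "stage_jdg_fm k = mem_fm (jdg_tm (N 0) (N k) (Sc (Pe (Pe (V 10) (V 12)) (N 0))) (V 14)) (V 7)"

definition schedule_jdg_fm :: "nat \<Rightarrow> nat \<Rightarrow> nat \<Rightarrow> nat \<Rightarrow> nat \<Rightarrow> fm" where
  "schedule_jdg_fm a0 a1 a2 b1 b0 = Disj (Conj (Eq (V 11) (N 0)) (stage_jdg_fm a0))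
    (Disj (Conj (Lt (N 0) (V 11)) (Conj (Lt (V 11) (Sc (V 2))) (stage_jdg_fm a1)))
    (Disj (Conj (Eq (V 11) (Sc (V 2))) (stage_jdg_fm a2))
    (Disj (Conj (Lt (Sc (V 2)) (V 11)) (Conj (Lt (V 11) (Sc (Sc (Pl (V 2) (V 3))))) (stage_jdg_fm b1)))
      (Conj (Neg (Lt (V 11) (Sc (Sc (Pl (V 2) (V 3)))))) (stage_jdg_fm b0)))))"

lemma holds_schedule_jdg_fm:
  "holds s (schedule_jdg_fm a0 a1 a2 b1 b0) \<longleftrightarrow>
    jdg 0 (chain_schedule a0 a1 a2 b1 b0 (s 2) (s 3) (s 11)) (Suc (pe (pe (s 10) (s 12)) 0)) (s 14)
      \<in> set_decode (s 7)"
  unfolding schedule_jdg_fm_def stage_jdg_fm_def chain_schedule_def by auto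

text \<open>Variables: 1 is the witness bound, 2 and 3 are \<open>c\<close> and \<open>c'\<close>, 5 is the code of the input
  set, 6 the code of the set of stage-tagged elements, 7 the code of the derivation set and
  8 the element \<open>pe t x\<close> to be supported.\<close>

definition stage_fm :: "nat \<Rightarrow> nat \<Rightarrow> nat \<Rightarrow> nat \<Rightarrow> nat \<Rightarrow> fm" where
  "stage_fm a0 a1 a2 b1 b0 = BEx 9 (Sc (V 8)) (BEx 10 (Sc (V 8)) (Conj (Eq (V 8) (Pe (V 9) (V 10)))
    (Disj (Conj (Eq (V 9) (N 0)) (mem_fm (V 10) (V 5)))
      (BEx 11 (V 9) (Conj (Eq (V 9) (Sc (V 11))) (BEx 12 (V 1)
        (Conj (BAll 13 (V 12) (Imp (mem_fm (V 13) (V 12)) (mem_fm (Pe (V 11) (V 13)) (V 6))))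
          (BEx 14 (V 1) (schedule_jdg_fm a0 a1 a2 b1 b0)))))))))"

lemma holds_stage_fm:
  "holds s (stage_fm a0 a1 a2 b1 b0) \<longleftrightarrow>
    stage_supported (derived_within (s 1) (s 7))
      (chain_schedule a0 a1 a2 b1 b0 (s 2) (s 3)) (s 5) (set_decode (s 6)) (s 8)"
proof -
  have bound: "t < Suc (pe t x)" "x < Suc (pe t x)" for t x :: nat
    using le_prod_encode_1[of t x] le_prod_encode_2[of x t] by linarith+
  show ?thesis
    unfolding stage_fm_def stage_supported_def derived_within_def
    by (auto simp: holds_schedule_jdg_fm bound ball_less_set_decode) blast+
qed

definition chain_fm :: "nat \<Rightarrow> nat \<Rightarrow> nat \<Rightarrow> nat \<Rightarrow> nat \<Rightarrow> fm" where
  "chain_fm a0 a1 a2 b1 b0 = BEx 2 (Sc (V 0)) (BEx 3 (Sc (V 0)) (BEx 4 (Sc (V 0)) (BEx 5 (Sc (V 0))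
    (Conj (Eq (V 0) (Pe (V 2) (Pe (V 3) (Pe (V 4) (V 5)))))
      (BEx 6 (V 1) (BEx 7 (V 1) (Conj (derivation_set_fm 7)
        (Conj (mem_fm (Pe (Pl (Pl (V 2) (V 3)) (N 3)) (V 4)) (V 6))
          (BAll 8 (V 6) (Imp (mem_fm (V 8) (V 6)) (stage_fm a0 a1 a2 b1 b0)))))))))))"

lemma holds_chain_fm:
  "holds (assign2 (pe c (pe c' (pe n d))) w) (chain_fm a0 a1 a2 b1 b0) \<longleftrightarrow>
    (\<exists>Q<w. \<exists>T<w. derivation_set (set_decode T) \<and> pe (c + c' + 3) n \<in> set_decode Q \<and>
      (\<forall>p\<in>set_decode Q. stage_supported
        (derived_within w T)
        (chain_schedule a0 a1 a2 b1 b0 c c') d (set_decode Q) p))"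
proof -
  have "c < Suc (pe c (pe c' (pe n d)))" "c' < Suc (pe c (pe c' (pe n d)))"
    "n < Suc (pe c (pe c' (pe n d)))" "d < Suc (pe c (pe c' (pe n d)))"
    using le_prod_encode_1[of c "pe c' (pe n d)"] le_prod_encode_2[of "pe c' (pe n d)" c]
      le_prod_encode_1[of c' "pe n d"] le_prod_encode_2[of "pe n d" c'] le_prod_encode_1[of n d]
      le_prod_encode_2[of d n]
    by linarith+
  then show ?thesis
    unfolding chain_fm_def
    by (auto simp: holds_stage_fm holds_derivation_set_fm ball_less_set_decode)
qed

lemma Gamma_iter_if_derived_within:
  assumes "derivation_set (set_decode T)" "pe t x \<in> set_decode Q"
    "\<forall>p\<in>set_decode Q. stage_supported (derived_within w T) ks d (set_decode Q) p"
  shows "x \<in> Gamma_iter ks t (set_decode d)"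
proof -
  have "stage_supported (\<lambda>i x e. pe x e \<in> W i) ks d (set_decode Q) p" if "p \<in> set_decode Q" for p
  proof (rule stage_supported_mono)
    show "stage_supported (derived_within w T) ks d (set_decode Q) p" using assms(3) that by blast
  qed (use assms(1) in \<open>auto simp: derived_within_def W_iff_derivable derivable_def\<close>)
  then show ?thesis using Gamma_iter_if_stage_supported assms(2) by blast
qed

lemma derived_within_if_Gamma_iter:
  assumes "x \<in> Gamma_iter ks t (set_decode d)"
  shows "\<exists>w Q. Q < w \<and> (\<exists>T<w. derivation_set (set_decode T) \<and> pe t x \<in> set_decode Q \<and>
    (\<forall>p\<in>set_decode Q. stage_supported (derived_within w T) ks d (set_decode Q) p))"
proof -
  obtain Q where Q: "finite Q" "\<forall>p\<in>Q. stage_supported (\<lambda>i x e. pe x e \<in> W i) ks d Q p" "pe t x \<in> Q"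
    using stage_supported_if_Gamma_iter[OF assms] by blast
  obtain T where T: "derivation_set (set_decode T)"
    "\<forall>p\<in>Q. stage_supported (\<lambda>i x e. \<exists>y. jdg 0 i (Suc (pe (pe x e) 0)) y \<in> set_decode T) ks d Q p"
    using stage_supported_derivation[OF Q(1,2)] by blast
  have "\<forall>p\<in>Q. \<exists>w. stage_supported (derived_within w T) ks d Q p"
    using T(2) stage_supported_derived_within by blast
  from bchoice[OF this] obtain wp where wp: "\<forall>p\<in>Q. stage_supported (derived_within (wp p) T) ks d Q p"
    by blast
  define w where "w = Suc (sum wp Q + set_encode Q + T)"
  have "stage_supported (derived_within w T) ks d Q p" if "p \<in> Q" for p
  proof (rule stage_supported_mono)
    show "stage_supported (derived_within (wp p) T) ks d Q p" using wp that by blast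
    have "wp p \<le> w" using member_le_sum[of p Q wp] Q(1) that unfolding w_def by simp
    then show "derived_within w T i x e" if "derived_within (wp p) T i x e" for i x e
      using that derived_within_mono by blast
  qed simp
  moreover have "set_encode Q < w" "T < w" unfolding w_def by simp_all
  ultimately show ?thesis
    using T(1) Q(1,3) by (intro exI[of _ w] exI[of _ "set_encode Q"]) (auto simp: set_encode_inverse)
qed

lemma chain_graph_sigma1:
  "x \<in> chain_graph a0 a1 a2 b1 b0 \<longleftrightarrow> (\<exists>w. holds (assign2 x w) (chain_fm a0 a1 a2 b1 b0))"
proof -
  obtain c c' n d where x: "x = pe c (pe c' (pe n d))"
    by (metis prod_decode_inverse surj_pair)
  have "x \<in> chain_graph a0 a1 a2 b1 b0 \<longleftrightarrow>
      n \<in> Gamma_iter (chain_schedule a0 a1 a2 b1 b0 c c') (c + c' + 3) (set_decode d)"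
    unfolding chain_graph_def x by auto
  also have "\<dots> \<longleftrightarrow> (\<exists>w. holds (assign2 x w) (chain_fm a0 a1 a2 b1 b0))"
    unfolding x holds_chain_fm using derived_within_if_Gamma_iter Gamma_iter_if_derived_within by blast
  finally show ?thesis .
qed

definition prefix_prog :: "nat \<Rightarrow> nat \<Rightarrow> recf" where
  "prefix_prog c c' = Cn prod_encode_prog [const_prog c, Cn prod_encode_prog [const_prog c', Id 0]]"

lemma eval_prefix_prog: "eval (prefix_prog c c') [x] (pe c (pe c' x))"
  unfolding prefix_prog_def
  by (intro eval_Cn_binary eval_const_prog eval_IdI eval_prod_encode_prog) (auto simp: arg_def)

lemma W_code_Cn_prefix_prog: "W (code (Cn r [prefix_prog c c'])) = {x. pe c (pe c' x) \<in> W (code r)}"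
proof -
  have "(\<exists>y. eval (Cn r [prefix_prog c c']) [x] y) \<longleftrightarrow> (\<exists>y. eval r [pe c (pe c' x)] y)" for x
  proof
    assume "\<exists>y. eval (Cn r [prefix_prog c c']) [x] y"
    then obtain y ys where "length ys = 1" "eval (prefix_prog c c') [x] (ys ! 0)" "eval r ys y"
      by (auto elim: eval.cases)
    moreover from this(1) have "ys = [ys ! 0]" by (cases ys) auto
    ultimately show "\<exists>y. eval r [pe c (pe c' x)] y"
      using eval_deterministic[OF eval_prefix_prog] by metis
  next
    assume "\<exists>y. eval r [pe c (pe c' x)] y"
    then show "\<exists>y. eval (Cn r [prefix_prog c c']) [x] y" using eval_Cn_unary[OF eval_prefix_prog] by blast
  qed
  then show ?thesis unfolding W_code by blast
qed

definition prefix_code_tm :: "nat \<Rightarrow> tm \<Rightarrow> tm \<Rightarrow> tm" where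
  "prefix_code_tm rc a b = Pe (N 3) (Pe (N rc) (Sc (Pe
     (Pe (N 3) (Pe (N (code prod_encode_prog)) (Sc (Pe (ConstCode a) (Sc (Pe
       (Pe (N 3) (Pe (N (code prod_encode_prog)) (Sc (Pe (ConstCode b) (Sc (Pe (Pe (N 2) (N 0)) (N 0)))))))
       (N 0)))))))
     (N 0))))"

lemma tval_prefix_code_tm:
  "tval s (prefix_code_tm (code r) a b) = code (Cn r [prefix_prog (tval s a) (tval s b)])"
  unfolding prefix_code_tm_def prefix_prog_def by simp

definition swap_pair :: "nat \<Rightarrow> nat" where
  "swap_pair p = pe (snd (prod_decode p)) (fst (prod_decode p))"

lemma swap_pair_prod_encode [simp]: "swap_pair (pe i j) = pe j i"
  by (simp add: swap_pair_def)

definition prefix_codes_fm :: "nat \<Rightarrow> fm" where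
  "prefix_codes_fm rc = BEx 2 (Sc (V 0)) (BEx 3 (Sc (V 0)) (Conj (Eq (V 0) (Pe (V 2) (V 3)))
     (Eq (V 1) (Pe (prefix_code_tm rc (V 0) (Pe (V 3) (V 2))) (prefix_code_tm rc (Pe (V 3) (V 2)) (V 0))))))"

lemma computable_prefix_codes:
  "computable (\<lambda>p. pe (code (Cn r [prefix_prog p (swap_pair p)])) (code (Cn r [prefix_prog (swap_pair p) p])))"
proof (rule computable_if_graph_definable[where p="prefix_codes_fm (code r)"])
  fix x y
  obtain i j where x: "x = pe i j" by (metis prod_decode_inverse surj_pair)
  have "i < Suc x" "j < Suc x" using x le_prod_encode_1[of i j] le_prod_encode_2[of j i] by linarith+
  then show "holds (assign2 x y) (prefix_codes_fm (code r)) \<longleftrightarrow>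
      y = pe (code (Cn r [prefix_prog x (swap_pair x)])) (code (Cn r [prefix_prog (swap_pair x) x]))"
    unfolding prefix_codes_fm_def using x by (auto simp: tval_prefix_code_tm)
qed

lemma Gamma_code_Cn_prefix_prog:
  assumes "W (code r) = chain_graph a0 a1 a2 b1 b0"
  shows "Gamma (code (Cn r [prefix_prog c c'])) = Gamma_iter (chain_schedule a0 a1 a2 b1 b0 c c') (c + c' + 3)"
proof -
  have "W (code (Cn r [prefix_prog c c'])) =
      {pe n d | n d. n \<in> Gamma_iter (chain_schedule a0 a1 a2 b1 b0 c c') (c + c' + 3) (set_decode d)}"
    unfolding W_code_Cn_prefix_prog assms chain_graph_def
    by auto
  then show ?thesis
    by (simp add: fun_eq_iff Gamma_eq_enum_op enum_op_Gamma_iter_graph)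
qed

lemma Gamma_iter_chain_schedule:
  assumes "Gamma a0 SA = FA 0" "\<And>m. Gamma a1 (FA m) = FA (Suc m)" "Gamma a2 (FA c) = FB c'"
    "\<And>m. Gamma b1 (FB (Suc m)) = FB m" "Gamma b0 (FB 0) = SB"
  shows "Gamma_iter (chain_schedule a0 a1 a2 b1 b0 c c') (c + c' + 3) SA = SB"
proof -
  let ?ks = "chain_schedule a0 a1 a2 b1 b0 c c'"
  have up: "Gamma_iter ?ks (Suc m) SA = FA m" if "m \<le> c" for m
    using that
  proof (induction m)
    case 0
    have "?ks 0 = a0" by (simp add: chain_schedule_def)
    then show ?case using assms(1) by simp
  next
    case (Suc m)
    then have "?ks (Suc m) = a1" by (simp add: chain_schedule_def)
    then show ?case using Suc assms(2) by simp
  qed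
  have down: "Gamma_iter ?ks (Suc (Suc c) + k) SA = FB (c' - k)" if "k \<le> c'" for k
    using that
  proof (induction k)
    case 0
    have "?ks (Suc c) = a2" by (simp add: chain_schedule_def)
    then show ?case using up[of c] assms(3) by simp
  next
    case (Suc k)
    then have "?ks (Suc (Suc c) + k) = b1" "c' - k = Suc (c' - Suc k)"
      by (simp_all add: chain_schedule_def)
    then show ?case using Suc assms(4)[of "c' - Suc k"] by simp
  qed
  have "?ks (Suc (Suc c) + c') = b0" by (simp add: chain_schedule_def)
  moreover have "Gamma_iter ?ks (Suc (Suc c) + c') SA = FB 0" using down[of c'] by simp
  moreover have "c + c' + 3 = Suc (Suc (Suc c) + c')" by simp
  ultimately show ?thesis by (simp only: Gamma_iter.simps(2) assms(5))
qed

lemma uniformity_functionD: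
  assumes "uniformity_function X f u" "A \<in> X" "B \<in> X" "Gamma i A = B" "Gamma j B = A"
  shows "Gamma (fst (prod_decode (u (pair i j)))) (f A) = f B"
    and "Gamma (snd (prod_decode (u (pair i j)))) (f B) = f A"
  using assms unfolding uniformity_function_def e_equiv_via_def by (auto simp: pair_def)

lemma tagged_mem_closed:
  assumes "closed_under_e_equiv X" "A \<in> X"
  shows "tagged A c \<in> X"
proof -
  obtain i j where "Gamma i = enum_op (tag_graph c)" "Gamma j = enum_op untag_graph"
    using sigma1_enum_op tag_graph_sigma1 untag_graph_sigma1 by metis
  then have "e_equiv A (tagged A c)"
    unfolding e_equiv_def e_reducible_def by (metis enum_op_tag_graph enum_op_untag_graph)
  then show ?thesis using assms unfolding closed_under_e_equiv_def by blast
qed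

lemma uniform_chain_indices:
  assumes "closed_under_e_equiv X" "uniformity_function X f u"
  obtains a0 a1 a2 b1 b0 where "\<And>A B i j. A \<in> X \<Longrightarrow> B \<in> X \<Longrightarrow> Gamma i A = B \<Longrightarrow> Gamma j B = A \<Longrightarrow>
    Gamma_iter (chain_schedule a0 a1 a2 b1 b0 (pe i j) (pe j i)) (pe i j + pe j i + 3) (f A) = f B"
proof -
  obtain iT iU iS iP iA where "Gamma iT = enum_op (tag_graph 0)" "Gamma iU = enum_op untag_graph"
    "Gamma iS = enum_op tag_succ_graph" "Gamma iP = enum_op tag_pred_graph"
    "Gamma iA = enum_op tag_apply_graph"
    using sigma1_enum_op tag_graph_sigma1 untag_graph_sigma1 tag_succ_graph_sigma1
      tag_pred_graph_sigma1 tag_apply_graph_sigma1 by metis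
  then have T: "Gamma iT A = tagged A 0" "Gamma iU (tagged A 0) = A"
    and S: "Gamma iS (tagged A m) = tagged A (Suc m)" "Gamma iP (tagged A (Suc m)) = tagged A m"
    and U: "Gamma iA (tagged A (pe i j)) = tagged (Gamma i A) (pe j i)" for A m i j
    by (simp_all add: enum_op_tag_graph enum_op_untag_graph enum_op_tag_succ_graph
        enum_op_tag_pred_graph enum_op_tag_apply_graph)
  let ?u = "\<lambda>i j. prod_decode (u (pair i j))"
  show ?thesis
  proof (rule that[of "fst (?u iT iU)" "fst (?u iS iP)" "fst (?u iA iA)" "snd (?u iS iP)" "snd (?u iT iU)"])
    fix A B i j assume AB: "A \<in> X" "B \<in> X" "Gamma i A = B" "Gamma j B = A"
    have tagged: "tagged Y m \<in> X" if "Y \<in> X" for Y m using tagged_mem_closed assms(1) that .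
    show "Gamma_iter (chain_schedule (fst (?u iT iU)) (fst (?u iS iP)) (fst (?u iA iA)) (snd (?u iS iP))
        (snd (?u iT iU)) (pe i j) (pe j i)) (pe i j + pe j i + 3) (f A) = f B"
    proof (rule Gamma_iter_chain_schedule[where FA="\<lambda>m. f (tagged A m)" and FB="\<lambda>m. f (tagged B m)"])
      show "Gamma (fst (?u iT iU)) (f A) = f (tagged A 0)"
        using uniformity_functionD(1)[OF assms(2) AB(1) tagged[OF AB(1)] T] .
      show "Gamma (snd (?u iT iU)) (f (tagged B 0)) = f B"
        using uniformity_functionD(2)[OF assms(2) AB(2) tagged[OF AB(2)] T] .
      show "Gamma (fst (?u iS iP)) (f (tagged A m)) = f (tagged A (Suc m))" for m
        using uniformity_functionD(1)[OF assms(2) tagged[OF AB(1)] tagged[OF AB(1)] S] .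
      show "Gamma (snd (?u iS iP)) (f (tagged B (Suc m))) = f (tagged B m)" for m
        using uniformity_functionD(2)[OF assms(2) tagged[OF AB(2)] tagged[OF AB(2)] S] .
      show "Gamma (fst (?u iA iA)) (f (tagged A (pe i j))) = f (tagged B (pe j i))"
        using uniformity_functionD(1)[OF assms(2) tagged[OF AB(1)] tagged[OF AB(2)]] U AB(3,4) by metis
    qed
  qed
qed

theorem lemma4p2:
  fixes X :: "nat set set" and f :: "nat set \<Rightarrow> nat set"
  assumes "closed_under_e_equiv X"
    and "uniformly_e_invariant X f"
  shows "\<exists>u. computable u \<and> uniformity_function X f u"
proof -
  obtain u where "uniformity_function X f u"
    using assms(2) unfolding uniformly_e_invariant_def by blast
  then obtain a0 a1 a2 b1 b0 where chain: "\<And>A B i j. A \<in> X \<Longrightarrow> B \<in> X \<Longrightarrow> Gamma i A = B \<Longrightarrow>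
      Gamma j B = A \<Longrightarrow> Gamma_iter (chain_schedule a0 a1 a2 b1 b0 (pe i j) (pe j i)) (pe i j + pe j i + 3) (f A) = f B"
    using uniform_chain_indices assms(1) by blast
  obtain r where r: "W (code r) = chain_graph a0 a1 a2 b1 b0"
    using sigma1_W_code chain_graph_sigma1 by metis
  let ?u = "\<lambda>p. pe (code (Cn r [prefix_prog p (swap_pair p)])) (code (Cn r [prefix_prog (swap_pair p) p]))"
  have "uniformity_function X f ?u"
    unfolding uniformity_function_def
  proof (intro ballI allI impI)
    fix A B i j assume A: "A \<in> X" and B: "B \<in> X" and "e_equiv_via A B (pair i j)"
    then have AB: "Gamma i A = B" "Gamma j B = A" by (simp_all add: e_equiv_via_def pair_def)
    show "e_equiv_via (f A) (f B) (?u (pair i j))"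
      using chain[OF A B AB] chain[OF B A AB(2,1)]
      by (simp add: e_equiv_via_def pair_def Gamma_code_Cn_prefix_prog[OF r] del: code.simps)
  qed
  then show ?thesis using computable_prefix_codes by blast
qed

end
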